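(* Let $0<\alpha<1$ and let $p:\mathbb{R}\to\mathbb{R}$ be Lipschitz-continuous with $p_2\le p(t)\le p_1<0$ for all $t\in\mathbb{R}$, for some constants $p_2\le p_1<0$. Set $\eta=((\alpha-1)p_1)^{-1/\alpha}$. Let $t_0,v_0$ be real numbers with $v_0>\sqrt{2(p_1-p_2)\eta}$. Then there exists a unique maximal solution $u$ of $\ddot u-\frac{1}{u^\alpha}=p(t)$, $u>0$, defined on an interval $(t_0,t_1)$ with $t_0<t_1<+\infty$, satisfying $\lim_{t\to t_0^+}u(t)=\lim_{t\to t_1^-}u(t)=0$, $\lim_{t\to t_0^+}\dot u(t)=v_0$, and $\lim_{t\to t_1^-}\dot u(t)=v_1$ for some real number $v_1<0$. *)

theory Defs
  imports "HOL-Analysis.Analysis"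
begin

definition is_solution ::
  "real \<Rightarrow> (real \<Rightarrow> real) \<Rightarrow> (real \<Rightarrow> real) \<Rightarrow> (real \<Rightarrow> real) \<Rightarrow> real \<Rightarrow> real \<Rightarrow> bool" where
  "is_solution \<alpha> p u u' a b \<longleftrightarrow>
     (\<forall>t\<in>{a<..<b}. u t > 0 \<and> (u has_real_derivative u' t) (at t) \<and>
        (u' has_real_derivative (p t + 1 / (u t powr \<alpha>))) (at t))"

end

theory Submission
  imports Defs
begin

text \<open>
  Near the ends of its interval of existence a solution is monotone and can be described by its
  hodograph: the time \<open>\<tau>\<close> and the kinetic energy \<open>W = u'\<^sup>2 / 2\<close> as functions of the position.
  In these coordinates the singular force \<open>u\<^sup>-\<^sup>\<alpha>\<close> becomes an integrable forcing term, so
  Picard's theorem yields solutions that leave \<open>0\<close> with speed \<open>v\<^sub>0\<close> or arrive at \<open>0\<close> with a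
  negative speed, as long as the energy stays positive. In between, once \<open>u \<ge> \<eta>\<close>, the
  acceleration \<open>p + u\<^sup>-\<^sup>\<alpha>\<close> is at most \<open>\<alpha> p\<^sub>1 < 0\<close>, so the solution turns around and falls back;
  the condition on \<open>v\<^sub>0\<close> guarantees that the energy does not vanish before \<open>u\<close> reaches \<open>\<eta>\<close>.
  The pieces are glued by uniqueness for the regular equation. Uniqueness of the whole solution
  holds because every solution leaving \<open>0\<close> with speed \<open>v\<^sub>0\<close> has the same hodograph near \<open>t\<^sub>0\<close>,
  and no solution can be continued through a zero of \<open>u\<close>.
\<close>

section \<open>Lipschitz systems\<close>

lemma continuous_on_compose_Pair:
  assumes "continuous_on UNIV (\<lambda>(s, y). f s y)" "continuous_on S y"
  shows "continuous_on S (\<lambda>s. f s (y s))"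
  using continuous_on_compose2[OF assms(1) continuous_on_Pair[OF continuous_on_id assms(2)]] by simp

lemma bielecki_integral_bound:
  fixes h :: "real \<Rightarrow> 'a::banach"
  assumes K: "0 < K" and s: "a \<le> s" and h: "h integrable_on {a..s}"
    and bound: "\<And>r. r \<in> {a..s} \<Longrightarrow> norm (h r) \<le> C * exp (K * (r - a))"
  shows "exp (- K * (s - a)) * norm (integral {a..s} h) \<le> C / K"
proof -
  have C: "0 \<le> C" using bound[of a] s by (auto intro: order_trans[OF norm_ge_zero])
  have "((\<lambda>r. exp (K * (r - a))) has_integral exp (K * (s - a)) / K - exp (K * (a - a)) / K) {a..s}"
    using K by (intro fundamental_theorem_of_calculus[OF s])
      (auto intro!: derivative_eq_intros simp: has_real_derivative_iff_has_vector_derivative[symmetric])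
  then have "((\<lambda>r. C * exp (K * (r - a))) has_integral C * ((exp (K * (s - a)) - 1) / K)) {a..s}"
    by (intro has_integral_mult_right) (simp add: diff_divide_distrib)
  then have "norm (integral {a..s} h) \<le> C * ((exp (K * (s - a)) - 1) / K)"
    using integral_norm_bound_integral[OF h] bound
    by (metis has_integral_integrable integral_unique)
  then have "exp (- K * (s - a)) * norm (integral {a..s} h)
      \<le> exp (- K * (s - a)) * (C * ((exp (K * (s - a)) - 1) / K))"
    by (intro mult_left_mono) auto
  also have "\<dots> = C / K * (1 - exp (- K * (s - a)))"
  proof -
    have "exp (- K * (s - a)) * exp (K * (s - a)) = 1" by (simp add: exp_add[symmetric])
    then show ?thesis by (simp add: field_simps)
  qed
  also have "\<dots> \<le> C / K"
    using C K by (intro mult_left_le) auto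
  finally show ?thesis .
qed

lemma clamp_bcontfun:
  fixes h :: "real \<Rightarrow> 'a::real_normed_vector"
  assumes "a \<le> b" and h: "continuous_on {a..b} h"
  shows "(\<lambda>t. h (max a (min b t))) \<in> bcontfun"
proof -
  have clamp: "max a (min b t) \<in> {a..b}" for t using \<open>a \<le> b\<close> by auto
  then have "continuous_on UNIV (\<lambda>t. h (max a (min b t)))"
    by (intro continuous_on_compose2[OF h]) (auto intro!: continuous_intros)
  moreover have "bounded (h ` {a..b})"
    by (intro compact_imp_bounded compact_continuous_image h) simp
  then have "bounded (range (\<lambda>t. h (max a (min b t))))"
    by (rule bounded_subset) (use clamp in auto)
  ultimately show ?thesis by (simp add: bcontfun_def)
qed

text \<open>The integral operator is a contraction with constant \<open>L / K\<close> for the weighted sup-norm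
  \<open>sup\<^sub>t exp (- K (t - a)) \<parallel>y t\<parallel>\<close>, \<open>K = L + 1\<close>; the unknown \<open>z\<close> of the fixed point problem is
  \<open>y\<close> with this weight removed, extended constantly outside \<open>{a..b}\<close>.\<close>
lemma integral_equation_solvable:
  fixes f :: "real \<Rightarrow> 'a::banach \<Rightarrow> 'a" and g :: "real \<Rightarrow> 'a"
  assumes ab: "a \<le> b" and L: "0 \<le> L"
    and f_cont: "continuous_on UNIV (\<lambda>(s, y). f s y)"
    and g_cont: "continuous_on {a..b} g"
    and lipschitz: "\<And>s y z. norm (f s y - f s z) \<le> L * norm (y - z)"
  obtains y where "continuous_on {a..b} y"
    "\<And>s. s \<in> {a..b} \<Longrightarrow> y s = g s + integral {a..s} (\<lambda>r. f r (y r))"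
proof -
  define K where "K = L + 1"
  have K: "0 < K" "0 \<le> L / K" "L / K < 1" using L by (auto simp: K_def)
  define c where "c t = max a (min b t)" for t
  define Y where "Y z r = exp (K * (r - a)) *\<^sub>R apply_bcontfun z r"
    for z :: "(real, 'a) bcontfun" and r
  define h where "h z s = exp (- K * (s - a)) *\<^sub>R (g s + integral {a..s} (\<lambda>r. f r (Y z r)))" for z s
  have f_Y_cont: "continuous_on UNIV (\<lambda>r. f r (Y z r))" for z
    by (rule continuous_on_compose_Pair[OF f_cont]) (auto simp: Y_def intro!: continuous_intros)
  have h_cont: "continuous_on {a..b} (h z)" for z
    unfolding h_def
    by (intro continuous_intros g_cont indefinite_integral_continuous_1 integrable_continuous_real
        continuous_on_subset[OF f_Y_cont]) auto
  have h_apply: "apply_bcontfun (Bcontfun (\<lambda>t. h z (c t))) t = h z (c t)" for z t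
    using clamp_bcontfun[OF ab h_cont[of z]] by (simp add: Bcontfun_inverse c_def)
  have "dist (Bcontfun (\<lambda>t. h z (c t))) (Bcontfun (\<lambda>t. h w (c t))) \<le> L / K * dist z w" for z w
  proof (rule dist_bound)
    fix t
    have "norm (f r (Y z r) - f r (Y w r)) \<le> L * dist z w * exp (K * (r - a))" for r
    proof -
      have "norm (Y z r - Y w r) \<le> exp (K * (r - a)) * dist z w"
        unfolding Y_def scaleR_diff_right[symmetric] using dist_bounded[of z r w]
        by (simp add: dist_norm)
      then have "norm (f r (Y z r) - f r (Y w r)) \<le> L * (exp (K * (r - a)) * dist z w)"
        using lipschitz[of r "Y z r" "Y w r"] mult_left_mono[OF _ L] by (meson order_trans)
      then show ?thesis by (simp add: mult_ac)
    qed
    then have "exp (- K * (c t - a)) * norm (integral {a..c t} (\<lambda>r. f r (Y z r) - f r (Y w r)))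
        \<le> L * dist z w / K"
      using ab K by (intro bielecki_integral_bound integrable_continuous_real continuous_intros
          continuous_on_subset[OF f_Y_cont]) (auto simp: c_def)
    then show "dist (apply_bcontfun (Bcontfun (\<lambda>t. h z (c t))) t)
        (apply_bcontfun (Bcontfun (\<lambda>t. h w (c t))) t) \<le> L / K * dist z w"
      unfolding h_apply by (simp add: h_def dist_norm scaleR_diff_right[symmetric] integral_diff
          integrable_continuous_real continuous_on_subset[OF f_Y_cont])
  qed
  then obtain z where z: "Bcontfun (\<lambda>t. h z (c t)) = z"
    using banach_fix_type[of "L / K" "\<lambda>z. Bcontfun (\<lambda>t. h z (c t))"] K by blast
  show ?thesis
  proof (rule that)
    show "continuous_on {a..b} (Y z)" unfolding Y_def by (intro continuous_intros) auto
    fix s assume s: "s \<in> {a..b}"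
    have "apply_bcontfun z s = h z s"
      using h_apply[of z s] z s by (simp add: c_def)
    then show "Y z s = g s + integral {a..s} (\<lambda>r. f r (Y z r))"
      by (simp add: Y_def h_def exp_minus)
  qed
qed

lemma integral_equation_has_derivative:
  fixes y g h :: "real \<Rightarrow> real"
  assumes y: "\<And>s. s \<in> {a..b} \<Longrightarrow> y s = g s + integral {a..s} h"
    and h: "continuous_on {a..b} h" and s: "a < s" "s < b"
    and g: "(g has_real_derivative G) (at s)"
  shows "(y has_real_derivative G + h s) (at s)"
proof -
  have "((\<lambda>x. integral {a..x} h) has_real_derivative h s) (at s within {a..b})"
    using s by (intro integral_has_real_derivative h) auto
  then have "((\<lambda>x. integral {a..x} h) has_real_derivative h s) (at s)"
    using s by (simp add: at_within_Icc_at)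
  then have "((\<lambda>x. g x + integral {a..x} h) has_real_derivative G + h s) (at s)"
    by (intro DERIV_add g)
  then show ?thesis
    by (rule has_field_derivative_transform_within_open[of _ _ _ "{a<..<b}"]) (use s y in auto)
qed

lemma norm_Pair_diff_le_sum_lipschitz:
  fixes z z' :: "real \<times> real"
  assumes L: "0 \<le> L" and a: "\<bar>a - a'\<bar> \<le> L * (\<bar>fst z - fst z'\<bar> + \<bar>snd z - snd z'\<bar>)"
    and b: "\<bar>b - b'\<bar> \<le> L * (\<bar>fst z - fst z'\<bar> + \<bar>snd z - snd z'\<bar>)"
  shows "norm ((a, b) - (a', b')) \<le> 4 * L * norm (z - z')"
proof -
  have z_components: "\<bar>fst z - fst z'\<bar> + \<bar>snd z - snd z'\<bar> \<le> 2 * norm (z - z')"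
    using norm_fst_le[of "fst (z - z')" "snd (z - z')"] norm_snd_le[of "snd (z - z')" "fst (z - z')"]
    unfolding prod.collapse by simp
  have "norm ((a, b) - (a', b')) \<le> \<bar>a - a'\<bar> + \<bar>b - b'\<bar>"
    using norm_Pair_le[of "a - a'" "b - b'"] by simp
  also have "\<dots> \<le> 2 * (L * (\<bar>fst z - fst z'\<bar> + \<bar>snd z - snd z'\<bar>))"
    using a b by simp
  also have "\<dots> \<le> 2 * (L * (2 * norm (z - z')))"
    using z_components L by (intro mult_left_mono) auto
  finally show ?thesis by simp
qed

lemma ode_pair_solvable:
  fixes F G :: "real \<Rightarrow> real \<Rightarrow> real \<Rightarrow> real" and f g f' g' :: "real \<Rightarrow> real"
  assumes ab: "a \<le> b" and L: "0 \<le> L"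
    and F_cont: "continuous_on UNIV (\<lambda>(s, x, y). F s x y)"
    and G_cont: "continuous_on UNIV (\<lambda>(s, x, y). G s x y)"
    and F_lipschitz: "\<And>s x y x' y'. \<bar>F s x y - F s x' y'\<bar> \<le> L * (\<bar>x - x'\<bar> + \<bar>y - y'\<bar>)"
    and G_lipschitz: "\<And>s x y x' y'. \<bar>G s x y - G s x' y'\<bar> \<le> L * (\<bar>x - x'\<bar> + \<bar>y - y'\<bar>)"
    and f: "continuous_on {a..b} f" "\<And>s. a < s \<Longrightarrow> s < b \<Longrightarrow> (f has_real_derivative f' s) (at s)"
    and g: "continuous_on {a..b} g" "\<And>s. a < s \<Longrightarrow> s < b \<Longrightarrow> (g has_real_derivative g' s) (at s)"
  obtains X Y where "continuous_on {a..b} X" "continuous_on {a..b} Y" "X a = f a" "Y a = g a"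
    "\<And>s. a < s \<Longrightarrow> s < b \<Longrightarrow> (X has_real_derivative f' s + F s (X s) (Y s)) (at s)"
    "\<And>s. a < s \<Longrightarrow> s < b \<Longrightarrow> (Y has_real_derivative g' s + G s (X s) (Y s)) (at s)"
proof -
  define FG where "FG s z = (F s (fst z) (snd z), G s (fst z) (snd z))" for s and z :: "real \<times> real"
  have FG_cont: "continuous_on UNIV (\<lambda>(s, z). FG s z)"
    using F_cont G_cont by (simp add: FG_def case_prod_beta continuous_on_Pair)
  have FG_lipschitz: "norm (FG s z - FG s z') \<le> (4 * L) * norm (z - z')" for s z z'
    unfolding FG_def using L F_lipschitz G_lipschitz by (rule norm_Pair_diff_le_sum_lipschitz)
  have "0 \<le> 4 * L" using L by simp
  then obtain z where z_cont: "continuous_on {a..b} z"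
    and z: "\<And>s. s \<in> {a..b} \<Longrightarrow> z s = (f s, g s) + integral {a..s} (\<lambda>r. FG r (z r))"
    using integral_equation_solvable[OF ab _ FG_cont continuous_on_Pair[OF f(1) g(1)] FG_lipschitz]
    by blast
  have FGz_cont: "continuous_on {a..b} (\<lambda>r. FG r (z r))"
    by (rule continuous_on_compose_Pair[OF FG_cont z_cont])
  have integral_components: "integral {a..s} (\<lambda>r. FG r (z r))
      = (integral {a..s} (\<lambda>r. fst (FG r (z r))), integral {a..s} (\<lambda>r. snd (FG r (z r))))"
    if "s \<in> {a..b}" for s
  proof -
    have "(\<lambda>r. FG r (z r)) integrable_on {a..s}"
      using that by (intro integrable_continuous_real continuous_on_subset[OF FGz_cont]) auto
    from integral_linear[OF this bounded_linear_fst] integral_linear[OF this bounded_linear_snd]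
    show ?thesis by (simp add: o_def)
  qed
  show ?thesis
  proof (rule that[of "\<lambda>s. fst (z s)" "\<lambda>s. snd (z s)"])
    show "continuous_on {a..b} (\<lambda>s. fst (z s))" "continuous_on {a..b} (\<lambda>s. snd (z s))"
      by (intro continuous_intros z_cont)+
    show "fst (z a) = f a" "snd (z a) = g a" using z[of a] ab by auto
    fix s assume s: "a < s" "s < b"
    have "((\<lambda>s. fst (z s)) has_real_derivative f' s + fst (FG s (z s))) (at s)"
      by (rule integral_equation_has_derivative[OF _ _ s f(2)[OF s]])
        (use z integral_components in \<open>auto intro!: continuous_intros FGz_cont\<close>)
    then show "((\<lambda>s. fst (z s)) has_real_derivative f' s + F s (fst (z s)) (snd (z s))) (at s)"
      by (simp add: FG_def)
    have "((\<lambda>s. snd (z s)) has_real_derivative g' s + snd (FG s (z s))) (at s)"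
      by (rule integral_equation_has_derivative[OF _ _ s g(2)[OF s]])
        (use z integral_components in \<open>auto intro!: continuous_intros FGz_cont\<close>)
    then show "((\<lambda>s. snd (z s)) has_real_derivative g' s + G s (fst (z s)) (snd (z s))) (at s)"
      by (simp add: FG_def)
  qed
qed

lemma lipschitz_energy_estimate:
  fixes d1 d2 e1 e2 L :: real
  assumes L: "0 \<le> L" and e1: "\<bar>e1\<bar> \<le> L * (\<bar>d1\<bar> + \<bar>d2\<bar>)" and e2: "\<bar>e2\<bar> \<le> L * (\<bar>d1\<bar> + \<bar>d2\<bar>)"
  shows "d1 * e1 + d2 * e2 \<le> 2 * L * (d1\<^sup>2 + d2\<^sup>2)"
proof -
  have "d1 * e1 \<le> \<bar>d1\<bar> * (L * (\<bar>d1\<bar> + \<bar>d2\<bar>))" "d2 * e2 \<le> \<bar>d2\<bar> * (L * (\<bar>d1\<bar> + \<bar>d2\<bar>))"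
    by (rule order_trans[OF abs_ge_self], simp add: abs_mult mult_left_mono e1 e2)+
  then have "d1 * e1 + d2 * e2 \<le> L * (\<bar>d1\<bar> + \<bar>d2\<bar>)\<^sup>2"
    by (simp add: power2_eq_square algebra_simps)
  also have "\<dots> \<le> L * (2 * (d1\<^sup>2 + d2\<^sup>2))"
  proof (intro mult_left_mono L)
    have "0 \<le> (\<bar>d1\<bar> - \<bar>d2\<bar>)\<^sup>2" by simp
    then show "(\<bar>d1\<bar> + \<bar>d2\<bar>)\<^sup>2 \<le> 2 * (d1\<^sup>2 + d2\<^sup>2)"
      unfolding power2_sum power2_diff power2_abs by (smt (verit))
  qed
  finally show ?thesis by (simp add: algebra_simps)
qed

text \<open>The weighted distance \<open>exp (- 4 L (s - a)) ((X - U)\<^sup>2 + (Y - V)\<^sup>2)\<close> is non-increasing and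
  vanishes at \<open>a\<close>.\<close>
lemma ode_pair_unique:
  fixes F G :: "real \<Rightarrow> real \<Rightarrow> real \<Rightarrow> real" and f g X Y U V :: "real \<Rightarrow> real"
  assumes L: "0 \<le> L"
    and F_lipschitz: "\<And>s x y x' y'. \<bar>F s x y - F s x' y'\<bar> \<le> L * (\<bar>x - x'\<bar> + \<bar>y - y'\<bar>)"
    and G_lipschitz: "\<And>s x y x' y'. \<bar>G s x y - G s x' y'\<bar> \<le> L * (\<bar>x - x'\<bar> + \<bar>y - y'\<bar>)"
    and cont: "continuous_on {a..b} X" "continuous_on {a..b} Y"
      "continuous_on {a..b} U" "continuous_on {a..b} V"
    and X_deriv: "\<And>s. a < s \<Longrightarrow> s < b \<Longrightarrow> (X has_real_derivative f s + F s (X s) (Y s)) (at s)"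
    and Y_deriv: "\<And>s. a < s \<Longrightarrow> s < b \<Longrightarrow> (Y has_real_derivative g s + G s (X s) (Y s)) (at s)"
    and U_deriv: "\<And>s. a < s \<Longrightarrow> s < b \<Longrightarrow> (U has_real_derivative f s + F s (U s) (V s)) (at s)"
    and V_deriv: "\<And>s. a < s \<Longrightarrow> s < b \<Longrightarrow> (V has_real_derivative g s + G s (U s) (V s)) (at s)"
    and init: "X a = U a" "Y a = V a"
    and t: "t \<in> {a..b}"
  shows "X t = U t \<and> Y t = V t"
proof -
  define E where "E s = exp (- (4 * L) * (s - a)) * ((X s - U s)\<^sup>2 + (Y s - V s)\<^sup>2)" for s
  have "E t \<le> E a"
  proof (rule DERIV_nonpos_imp_decreasing_open[of a t E])
    show "a \<le> t" using t by simp
    show "continuous_on {a..t} E"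
      unfolding E_def using t by (intro continuous_intros continuous_on_subset[OF cont(1)]
        continuous_on_subset[OF cont(2)] continuous_on_subset[OF cont(3)] continuous_on_subset[OF cont(4)]) auto
    fix s assume s: "a < s" "s < t"
    then have s': "a < s" "s < b" using t by auto
    define e1 where "e1 = F s (X s) (Y s) - F s (U s) (V s)"
    define e2 where "e2 = G s (X s) (Y s) - G s (U s) (V s)"
    define D where "D = exp (- (4 * L) * (s - a)) * (2 * ((X s - U s) * e1 + (Y s - V s) * e2)
        - 4 * L * ((X s - U s)\<^sup>2 + (Y s - V s)\<^sup>2))"
    have "(E has_real_derivative D) (at s)"
      unfolding E_def D_def
      by (rule derivative_eq_intros refl X_deriv[OF s'] Y_deriv[OF s'] U_deriv[OF s'] V_deriv[OF s'])+
        (simp add: e1_def e2_def algebra_simps)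
    moreover have "(X s - U s) * e1 + (Y s - V s) * e2 \<le> 2 * L * ((X s - U s)\<^sup>2 + (Y s - V s)\<^sup>2)"
      unfolding e1_def e2_def by (intro lipschitz_energy_estimate L F_lipschitz G_lipschitz)
    then have "D \<le> 0" unfolding D_def by (intro mult_nonneg_nonpos) auto
    ultimately show "\<exists>D. (E has_real_derivative D) (at s) \<and> D \<le> 0" by blast
  qed
  also have "E a = 0" by (simp add: E_def init)
  finally have "(X t - U t)\<^sup>2 + (Y t - V t)\<^sup>2 \<le> 0"
    by (simp add: E_def mult_le_0_iff)
  then have "(X t - U t)\<^sup>2 = 0" "(Y t - V t)\<^sup>2 = 0"
    using zero_le_power2[of "X t - U t"] zero_le_power2[of "Y t - V t"] by linarith+
  then show ?thesis by simp
qed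

section \<open>Calculus on intervals\<close>

lemma positive_derivative_inverse:
  fixes T T' :: "real \<Rightarrow> real"
  assumes ab: "a < b" and T_cont: "continuous_on {a..b} T"
    and T_deriv: "\<And>x. a < x \<Longrightarrow> x < b \<Longrightarrow> (T has_real_derivative T' x) (at x)"
    and T'_pos: "\<And>x. a < x \<Longrightarrow> x < b \<Longrightarrow> 0 < T' x"
  obtains \<sigma> where "T a < T b" "continuous_on {T a..T b} \<sigma>"
    "\<And>t. t \<in> {T a..T b} \<Longrightarrow> \<sigma> t \<in> {a..b} \<and> T (\<sigma> t) = t"
    "\<And>x. x \<in> {a..b} \<Longrightarrow> \<sigma> (T x) = x"
    "\<And>t. T a < t \<Longrightarrow> t < T b \<Longrightarrow> a < \<sigma> t \<and> \<sigma> t < b \<and> (\<sigma> has_real_derivative inverse (T' (\<sigma> t))) (at t)"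
proof -
  have mono: "T x < T y" if "a \<le> x" "x < y" "y \<le> b" for x y
    using that by (intro DERIV_pos_imp_increasing_open[of x y T])
      (auto intro!: continuous_on_subset[OF T_cont] exI[of _ "T' _"] T_deriv T'_pos)
  have inj: "inj_on T {a..b}"
    by (rule inj_onI) (metis atLeastAtMost_iff linorder_neqE_linordered_idom mono order_less_irrefl)
  have image: "T ` {a..b} = {T a..T b}"
  proof
    show "T ` {a..b} \<subseteq> {T a..T b}"
      using mono by (force simp: le_less)
    show "{T a..T b} \<subseteq> T ` {a..b}"
      using IVT'[of T a _ b] T_cont ab by force
  qed
  define \<sigma> where "\<sigma> = inv_into {a..b} T"
  have right_inverse: "\<sigma> t \<in> {a..b} \<and> T (\<sigma> t) = t" if "t \<in> {T a..T b}" for t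
    using that image unfolding \<sigma>_def by (metis f_inv_into_f inv_into_into)
  have left_inverse: "\<sigma> (T x) = x" if "x \<in> {a..b}" for x
    using that inj unfolding \<sigma>_def by (simp add: inv_into_f_f)
  have \<sigma>_cont: "continuous_on {T a..T b} \<sigma>"
    using continuous_on_inv[OF T_cont compact_Icc, of \<sigma>] left_inverse image by auto
  show ?thesis
  proof (rule that[OF mono[OF order_refl ab order_refl] \<sigma>_cont right_inverse left_inverse])
    fix t assume t: "T a < t" "t < T b"
    then have "\<sigma> t \<in> {a..b}" "T (\<sigma> t) = t" using right_inverse[of t] by auto
    with t have inside: "a < \<sigma> t" "\<sigma> t < b" by (auto simp: le_less)
    have "isCont \<sigma> t"
      using continuous_on_interior[OF \<sigma>_cont, of t] t by auto
    then have "(\<sigma> has_real_derivative inverse (T' (\<sigma> t))) (at t)"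
      using T_deriv[OF inside] T'_pos[OF inside] t right_inverse \<open>T (\<sigma> t) = t\<close>
      by (intro DERIV_inverse_function[where f = T and a = "T a" and b = "T b"]) auto
    with inside show "a < \<sigma> t \<and> \<sigma> t < b \<and> (\<sigma> has_real_derivative inverse (T' (\<sigma> t))) (at t)"
      by blast
  qed
qed

lemma increment_le_by_derivative:
  fixes f g f' g' :: "real \<Rightarrow> real"
  assumes "r \<le> s" "continuous_on {r..s} f" "continuous_on {r..s} g"
    and "\<And>x. r < x \<Longrightarrow> x < s \<Longrightarrow> (f has_real_derivative f' x) (at x)"
    and "\<And>x. r < x \<Longrightarrow> x < s \<Longrightarrow> (g has_real_derivative g' x) (at x)"
    and "\<And>x. r < x \<Longrightarrow> x < s \<Longrightarrow> f' x \<le> g' x"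
  shows "f s - f r \<le> g s - g r"
proof -
  have "(\<lambda>x. f x - g x) s \<le> (\<lambda>x. f x - g x) r"
  proof (rule DERIV_nonpos_imp_decreasing_open[OF assms(1)])
    fix x assume "r < x" "x < s"
    then show "\<exists>D. ((\<lambda>x. f x - g x) has_real_derivative D) (at x) \<and> D \<le> 0"
      using assms(4-6) by (intro exI[of _ "f' x - g' x"]) (auto intro!: derivative_eq_intros)
  qed (intro continuous_intros assms(2,3))
  then show ?thesis by simp
qed

lemma max_truncation_lipschitz:
  fixes f f' :: "real \<Rightarrow> real"
  assumes f: "\<And>x. m \<le> x \<Longrightarrow> (f has_real_derivative f' x) (at x)"
    and f'_bound: "\<And>x. m \<le> x \<Longrightarrow> \<bar>f' x\<bar> \<le> C"
  shows "\<bar>f (max x m) - f (max y m)\<bar> \<le> C * \<bar>x - y\<bar>"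
proof -
  have increment: "\<bar>f s - f r\<bar> \<le> C * (s - r)" if "m \<le> r" "r \<le> s" for r s
  proof (cases "r = s")
    case False
    with that obtain z where z: "r < z" "z < s" "f s - f r = (s - r) * f' z"
      using MVT2[of r s f f'] f by force
    then have "\<bar>f s - f r\<bar> = (s - r) * \<bar>f' z\<bar>" by (simp add: abs_mult)
    also have "\<dots> \<le> (s - r) * C" using f'_bound[of z] z that by (intro mult_left_mono) auto
    finally show ?thesis by (simp add: mult.commute)
  qed simp
  have increment_abs: "\<bar>f s - f r\<bar> \<le> C * \<bar>s - r\<bar>" if "m \<le> r" "m \<le> s" for r s
    using increment[of r s] increment[of s r] that
    by (cases "r \<le> s") (simp_all add: abs_minus_commute)
  have "0 \<le> C" using f'_bound[of m] by auto
  moreover have "\<bar>max x m - max y m\<bar> \<le> \<bar>x - y\<bar>" by (simp add: max_def abs_if)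
  ultimately show ?thesis
    using increment_abs[of "max y m" "max x m"] by (meson max.cobounded2 mult_left_mono order_trans)
qed

lemma powr_max_lipschitz:
  fixes \<alpha> \<delta> :: real
  assumes "0 < \<alpha>" "0 < \<delta>"
  shows "\<bar>max x \<delta> powr - \<alpha> - max y \<delta> powr - \<alpha>\<bar> \<le> \<alpha> * \<delta> powr (- \<alpha> - 1) * \<bar>x - y\<bar>"
proof (rule max_truncation_lipschitz[where f' = "\<lambda>x. - \<alpha> * x powr (- \<alpha> - 1)"])
  fix x assume x: "\<delta> \<le> x"
  then show "((\<lambda>x. x powr - \<alpha>) has_real_derivative - \<alpha> * x powr (- \<alpha> - 1)) (at x)"
    using assms by (auto intro!: derivative_eq_intros)
  have "x powr (- \<alpha> - 1) \<le> \<delta> powr (- \<alpha> - 1)" using x assms by (intro powr_mono2') auto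
  then show "\<bar>- \<alpha> * x powr (- \<alpha> - 1)\<bar> \<le> \<alpha> * \<delta> powr (- \<alpha> - 1)"
    using assms by (simp add: abs_mult)
qed

lemma inverse_sqrt_max_lipschitz:
  fixes m :: real
  assumes "0 < m"
  shows "\<bar>1 / sqrt (2 * max x m) - 1 / sqrt (2 * max y m)\<bar> \<le> 1 / (2 * m * sqrt (2 * m)) * \<bar>x - y\<bar>"
proof (rule max_truncation_lipschitz[where f' = "\<lambda>x. - (1 / (2 * x * sqrt (2 * x)))"])
  fix x assume x: "m \<le> x"
  then show "((\<lambda>x. 1 / sqrt (2 * x)) has_real_derivative - (1 / (2 * x * sqrt (2 * x)))) (at x)"
    using assms by (auto intro!: derivative_eq_intros simp: field_simps real_sqrt_mult)
  have "2 * m * sqrt (2 * m) \<le> 2 * x * sqrt (2 * x)"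
    using x assms by (intro mult_mono) auto
  then show "\<bar>- (1 / (2 * x * sqrt (2 * x)))\<bar> \<le> 1 / (2 * m * sqrt (2 * m))"
    using assms x by (simp add: frac_le)
qed

lemma continuous_on_Icc_fun_upd_left:
  fixes f :: "real \<Rightarrow> real"
  assumes f: "continuous_on {a<..<b} f" and lim: "(f \<longlongrightarrow> l) (at_right a)" and e: "a < e" "e < b"
  shows "continuous_on {a..e} (f(a := l))"
proof -
  have upd_at: "(f(a := l) \<longlongrightarrow> f x) (at x within S)" if "a < x" "x < b" for x S
  proof -
    have "isCont f x" using continuous_on_interior[OF f] that by auto
    then have "(f \<longlongrightarrow> f x) (at x within S)" by (simp add: isCont_def tendsto_within_subset[OF _ subset_UNIV])
    moreover have "eventually (\<lambda>y. f y = (f(a := l)) y) (at x within S)"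
      using eventually_at_topological[of _ x] that
      by (auto simp: eventually_at_filter intro!: eventually_mono[OF eventually_neq_at_within[of a x S]])
    ultimately show ?thesis by (rule Lim_transform_eventually)
  qed
  show ?thesis
  proof (rule continuous_on_IccI)
    have "eventually (\<lambda>y. f y = (f(a := l)) y) (at_right a)"
      by (simp add: eventually_at_filter)
    then show "(f(a := l) \<longlongrightarrow> (f(a := l)) a) (at_right a)"
      using Lim_transform_eventually[OF lim] by simp
    show "(f(a := l) \<longlongrightarrow> (f(a := l)) e) (at_left e)" using upd_at e by simp
    show "(f(a := l) \<longlongrightarrow> (f(a := l)) x) (at x)" if "a < x" "x < e" for x
      using upd_at[of x UNIV] that e by simp
  qed (use e in simp)
qed

lemma tendsto_at_right_by_continuous_Icc:
  fixes f g :: "real \<Rightarrow> real"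
  assumes "continuous_on {a..b} f" "a < b" "a < c" "\<And>t. a < t \<Longrightarrow> t < c \<Longrightarrow> g t = f t"
  shows "(g \<longlongrightarrow> f a) (at_right a)"
proof (rule Lim_transform_eventually[OF continuous_on_Icc_at_rightD[OF assms(1,2)]])
  show "\<forall>\<^sub>F t in at_right a. f t = g t"
    using assms(3,4) by (auto simp: eventually_at_right_field intro!: exI[of _ c])
qed

lemma tendsto_at_left_by_continuous_Icc:
  fixes f g :: "real \<Rightarrow> real"
  assumes "continuous_on {a..b} f" "a < b" "c < b" "\<And>t. c < t \<Longrightarrow> t < b \<Longrightarrow> g t = f t"
  shows "(g \<longlongrightarrow> f b) (at_left b)"
proof (rule Lim_transform_eventually[OF continuous_on_Icc_at_leftD[OF assms(1,2)]])
  show "\<forall>\<^sub>F t in at_left b. f t = g t"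
    using assms(3,4) by (auto simp: eventually_at_left_field intro!: exI[of _ c])
qed

lemma ge_min_endpoints_by_derivative_sign:
  fixes u v :: "real \<Rightarrow> real"
  assumes "a \<le> \<xi>" "\<xi> \<le> c" and u_cont: "continuous_on {a..c} u"
    and u_deriv: "\<And>t. a < t \<Longrightarrow> t < c \<Longrightarrow> (u has_real_derivative v t) (at t)"
    and v_rise: "\<And>t. a < t \<Longrightarrow> t < \<xi> \<Longrightarrow> 0 \<le> v t" and v_fall: "\<And>t. \<xi> < t \<Longrightarrow> t < c \<Longrightarrow> v t \<le> 0"
    and t: "t \<in> {a..c}"
  shows "min (u a) (u c) \<le> u t"
proof (cases "t \<le> \<xi>")
  case True
  have "u a \<le> u t"
  proof (rule DERIV_nonneg_imp_increasing_open[of a t])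
    fix x assume "a < x" "x < t"
    then show "\<exists>D. (u has_real_derivative D) (at x) \<and> 0 \<le> D"
      using u_deriv[of x] v_rise[of x] True assms(2) t by auto
  qed (use t in \<open>auto intro: continuous_on_subset[OF u_cont]\<close>)
  then show ?thesis by simp
next
  case False
  have "u c \<le> u t"
  proof (rule DERIV_nonpos_imp_decreasing_open[of t c])
    fix x assume "t < x" "x < c"
    then show "\<exists>D. (u has_real_derivative D) (at x) \<and> D \<le> 0"
      using u_deriv[of x] v_fall[of x] False assms(1) t by auto
  qed (use t in \<open>auto intro: continuous_on_subset[OF u_cont]\<close>)
  then show ?thesis by simp
qed

lemma concave_turning_point:
  fixes v v' :: "real \<Rightarrow> real"
  assumes k: "0 < k" and V: "0 < V" and turn: "a + V / k < T" and v_cont: "continuous_on {a..T} v"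
    and v_deriv: "\<And>t. a < t \<Longrightarrow> t < T \<Longrightarrow> (v has_real_derivative v' t) (at t)"
    and v'_le: "\<And>t. a < t \<Longrightarrow> t < T \<Longrightarrow> v' t \<le> - k"
    and v_a: "v a = V"
  obtains \<xi> where "a < \<xi>" "\<xi> < T" "\<And>t. a \<le> t \<Longrightarrow> t < \<xi> \<Longrightarrow> 0 < v t" "\<And>t. \<xi> < t \<Longrightarrow> t \<le> T \<Longrightarrow> v t < 0"
    "\<And>t. a \<le> t \<Longrightarrow> t \<le> T \<Longrightarrow> v t \<le> V - k * (t - a)"
proof -
  have v_decay: "v s - v r \<le> - k * (s - r)" if "a \<le> r" "r \<le> s" "s \<le> T" for r s
  proof -
    have "v s - v r \<le> - k * s - - k * r"
      by (rule increment_le_by_derivative[of r s v "\<lambda>t. - k * t" v' "\<lambda>_. - k"])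
        (use that in \<open>auto intro!: continuous_on_subset[OF v_cont] continuous_intros derivative_eq_intros
          v_deriv v'_le\<close>)
    then show ?thesis by (simp add: algebra_simps)
  qed
  have "0 < V / k" using k V by simp
  obtain \<xi> where \<xi>: "a \<le> \<xi>" "\<xi> \<le> a + V / k" "v \<xi> = 0"
    using IVT2'[of v "a + V / k" 0 a] v_decay[of a "a + V / k"] v_a k V \<open>0 < V / k\<close> turn
      continuous_on_subset[OF v_cont, of "{a..a + V / k}"] by auto
  show ?thesis
  proof (rule that)
    show "a < \<xi>" using \<xi> v_a V by (auto simp: le_less)
    show "\<xi> < T" using \<xi> turn by simp
    show "0 < v t" if "a \<le> t" "t < \<xi>" for t
    proof -
      have "0 < k * (\<xi> - t)" using k that by simp
      then show ?thesis using v_decay[of t \<xi>] \<xi> turn that by simp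
    qed
    show "v t < 0" if "\<xi> < t" "t \<le> T" for t
    proof -
      have "0 < k * (t - \<xi>)" using k that by simp
      then show ?thesis using v_decay[of \<xi> t] \<xi> that by (simp add: algebra_simps)
    qed
    show "v t \<le> V - k * (t - a)" if "a \<le> t" "t \<le> T" for t
      using v_decay[of a t] v_a that by simp
  qed
qed

text \<open>\<open>T\<close> is chosen such that the parabola \<open>u a + V (t - a) - k (t - a)\<^sup>2 / 2\<close>, which bounds \<open>u\<close>
  from above, lies below \<open>u a\<close> at \<open>T\<close>.\<close>
lemma concave_excursion:
  fixes u v v' :: "real \<Rightarrow> real"
  assumes k: "0 < k" and V: "0 < V" and T: "T = a + 2 * V / k + 1"
    and u_cont: "continuous_on {a..T} u" and v_cont: "continuous_on {a..T} v"
    and u_deriv: "\<And>t. a < t \<Longrightarrow> t < T \<Longrightarrow> (u has_real_derivative v t) (at t)"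
    and v_deriv: "\<And>t. a < t \<Longrightarrow> t < T \<Longrightarrow> (v has_real_derivative v' t) (at t)"
    and v'_le: "\<And>t. a < t \<Longrightarrow> t < T \<Longrightarrow> v' t \<le> - k"
    and v_a: "v a = V"
  obtains b c where "a < b" "b < c" "c \<le> T" "v b < 0" "\<And>t. t \<in> {a..c} \<Longrightarrow> u a \<le> u t"
proof -
  have "a < T" using k V by (simp add: T add_pos_pos)
  have "0 < V / k" using k V by simp
  then have "a + V / k < T" unfolding T times_divide_eq_right[symmetric] by linarith
  then obtain \<xi> where "a < \<xi>" "\<xi> < T" and v_pos: "\<And>t. a \<le> t \<Longrightarrow> t < \<xi> \<Longrightarrow> 0 < v t"
    and v_neg: "\<And>t. \<xi> < t \<Longrightarrow> t \<le> T \<Longrightarrow> v t < 0"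
    and v_le: "\<And>t. a \<le> t \<Longrightarrow> t \<le> T \<Longrightarrow> v t \<le> V - k * (t - a)"
    using concave_turning_point[OF k V _ v_cont v_deriv v'_le v_a] by blast
  have u_cont': "continuous_on {r..s} u" if "a \<le> r" "s \<le> T" for r s
    using that by (auto intro: continuous_on_subset[OF u_cont])
  have "u T - u a \<le> V * (T - a) - k * (T - a)\<^sup>2 / 2 - (V * (a - a) - k * (a - a)\<^sup>2 / 2)"
    by (rule increment_le_by_derivative[of a T u "\<lambda>t. V * (t - a) - k * (t - a)\<^sup>2 / 2" v "\<lambda>t. V - k * (t - a)"])
      (use v_le \<open>a < T\<close> in \<open>auto intro!: u_cont' continuous_intros derivative_eq_intros u_deriv
        simp: field_simps power2_eq_square\<close>)
  also have "\<dots> = - (T - a) * k / 2" using k by (simp add: T power2_eq_square field_simps)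
  also have "\<dots> < 0" using k \<open>a < T\<close> by (simp add: mult_neg_pos)
  finally have "u T < u a" by simp
  moreover have "u a < u \<xi>"
  proof (rule DERIV_pos_imp_increasing_open[OF \<open>a < \<xi>\<close>])
    fix x assume "a < x" "x < \<xi>"
    then show "\<exists>D. (u has_real_derivative D) (at x) \<and> 0 < D"
      using u_deriv[of x] v_pos[of x] \<open>\<xi> < T\<close> by auto
  qed (use \<open>\<xi> < T\<close> in \<open>auto intro: u_cont'\<close>)
  ultimately obtain c where c: "\<xi> \<le> c" "c \<le> T" "u c = u a"
    using IVT2'[of u T "u a" \<xi>] \<open>\<xi> < T\<close> \<open>a < \<xi>\<close> u_cont'[of \<xi> T] by auto
  with \<open>u a < u \<xi>\<close> have "\<xi> < c" by (auto simp: le_less)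
  show ?thesis
  proof (rule that[of "(\<xi> + c) / 2" c])
    show "a < (\<xi> + c) / 2" "(\<xi> + c) / 2 < c" "c \<le> T" using \<open>a < \<xi>\<close> \<open>\<xi> < c\<close> c by auto
    show "v ((\<xi> + c) / 2) < 0" using v_neg \<open>\<xi> < c\<close> c by auto
    show "u a \<le> u t" if "t \<in> {a..c}" for t
    proof -
      have "min (u a) (u c) \<le> u t"
      proof (rule ge_min_endpoints_by_derivative_sign[OF less_imp_le[OF \<open>a < \<xi>\<close>] c(1)
            u_cont'[OF order_refl c(2)] _ _ _ that])
        show "(u has_real_derivative v s) (at s)" if "a < s" "s < c" for s using u_deriv that c by simp
        show "0 \<le> v s" if "a < s" "s < \<xi>" for s using v_pos[of s] that by simp
        show "v s \<le> 0" if "\<xi> < s" "s < c" for s using v_neg[of s] that c by simp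
      qed
      with c(3) show ?thesis by simp
    qed
  qed
qed

lemma continuous_on_Icc_positive_lower_bound:
  fixes f :: "real \<Rightarrow> real"
  assumes "a \<le> b" "continuous_on {a..b} f" "\<And>s. s \<in> {a..b} \<Longrightarrow> 0 < f s"
  obtains \<delta> where "0 < \<delta>" "\<And>s. s \<in> {a..b} \<Longrightarrow> \<delta> \<le> f s"
proof -
  obtain s0 where "s0 \<in> {a..b}" "\<And>s. s \<in> {a..b} \<Longrightarrow> f s0 \<le> f s"
    using continuous_attains_inf[OF compact_Icc _ assms(2)] assms(1) by auto
  with assms(3) show ?thesis using that by blast
qed

section \<open>Solutions of the singular equation\<close>

lemma is_solution_iff:
  "is_solution \<alpha> p u u' a b \<longleftrightarrow> (\<forall>t\<in>{a<..<b}. 0 < u t \<and> (u has_real_derivative u' t) (at t) \<and>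
     (u' has_real_derivative p t + u t powr - \<alpha>) (at t))"
  by (simp add: is_solution_def powr_minus_divide)

lemma is_solution_subinterval:
  "is_solution \<alpha> p u u' a b \<Longrightarrow> a \<le> c \<Longrightarrow> d \<le> b \<Longrightarrow> is_solution \<alpha> p u u' c d"
  by (auto simp: is_solution_def)

lemma is_solution_cong:
  assumes u: "is_solution \<alpha> p u u' a b"
    and w: "\<And>t. a < t \<Longrightarrow> t < b \<Longrightarrow> w t = u t" and w': "\<And>t. a < t \<Longrightarrow> t < b \<Longrightarrow> w' t = u' t"
  shows "is_solution \<alpha> p w w' a b"
  unfolding is_solution_def
proof (intro ballI conjI)
  fix t assume t: "t \<in> {a<..<b}"
  then have "0 < u t" and u_deriv: "(u has_real_derivative u' t) (at t)"
    and u'_deriv: "(u' has_real_derivative p t + 1 / u t powr \<alpha>) (at t)"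
    using u by (simp_all add: is_solution_def)
  have eq: "\<And>s. s \<in> {a<..<b} \<Longrightarrow> u s = w s" "\<And>s. s \<in> {a<..<b} \<Longrightarrow> u' s = w' s"
    using w w' by simp_all
  show "0 < w t" using \<open>0 < u t\<close> eq(1)[OF t] by simp
  show "(w has_real_derivative w' t) (at t)"
    using has_field_derivative_transform_within_open[OF u_deriv open_greaterThanLessThan t eq(1)] eq(2)[OF t]
    by simp
  show "(w' has_real_derivative p t + 1 / w t powr \<alpha>) (at t)"
    using has_field_derivative_transform_within_open[OF u'_deriv open_greaterThanLessThan t eq(2)] eq(1)[OF t]
    by simp
qed

lemma is_solution_union:
  assumes "is_solution \<alpha> p u u' a b" "is_solution \<alpha> p u u' c d" "c < b"
  shows "is_solution \<alpha> p u u' a d"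
proof -
  have "\<And>t. t \<in> {a<..<d} \<Longrightarrow> t \<in> {a<..<b} \<or> t \<in> {c<..<d}" using \<open>c < b\<close> by auto
  then show ?thesis using assms(1,2) unfolding is_solution_def by blast
qed

lemma is_solution_glue:
  assumes u: "is_solution \<alpha> p u u' a b" and w: "is_solution \<alpha> p w w' c d" and "c < b"
    and agree: "\<And>t. c < t \<Longrightarrow> t < b \<Longrightarrow> u t = w t \<and> u' t = w' t"
  shows "is_solution \<alpha> p (\<lambda>t. if t < b then u t else w t) (\<lambda>t. if t < b then u' t else w' t) a d"
proof -
  have "is_solution \<alpha> p (\<lambda>t. if t < b then u t else w t) (\<lambda>t. if t < b then u' t else w' t) a b"
    by (rule is_solution_cong[OF u]) auto
  moreover have "is_solution \<alpha> p (\<lambda>t. if t < b then u t else w t) (\<lambda>t. if t < b then u' t else w' t) c d"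
    by (rule is_solution_cong[OF w]) (use agree in auto)
  ultimately show ?thesis using \<open>c < b\<close> by (rule is_solution_union)
qed

lemma is_solution_continuous:
  assumes "is_solution \<alpha> p u u' a b"
  shows "continuous_on {a<..<b} u" "continuous_on {a<..<b} u'"
  using assms by (auto simp: is_solution_def intro!: continuous_at_imp_continuous_on DERIV_isCont)

lemma truncated_force_lipschitz:
  fixes \<alpha> \<delta> :: real
  assumes "0 < \<alpha>" "0 < \<delta>"
  shows "\<bar>y - y'\<bar> \<le> max 1 (\<alpha> * \<delta> powr (- \<alpha> - 1)) * (\<bar>x - x'\<bar> + \<bar>y - y'\<bar>)"
    and "\<bar>p s + max x \<delta> powr - \<alpha> - (p s + max x' \<delta> powr - \<alpha>)\<bar>
      \<le> max 1 (\<alpha> * \<delta> powr (- \<alpha> - 1)) * (\<bar>x - x'\<bar> + \<bar>y - y'\<bar>)"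
proof -
  have sum_le: "\<bar>x - x'\<bar> + \<bar>y - y'\<bar> \<le> max 1 (\<alpha> * \<delta> powr (- \<alpha> - 1)) * (\<bar>x - x'\<bar> + \<bar>y - y'\<bar>)"
    using mult_right_mono[of 1 "max 1 (\<alpha> * \<delta> powr (- \<alpha> - 1))" "\<bar>x - x'\<bar> + \<bar>y - y'\<bar>"] by simp
  then show "\<bar>y - y'\<bar> \<le> max 1 (\<alpha> * \<delta> powr (- \<alpha> - 1)) * (\<bar>x - x'\<bar> + \<bar>y - y'\<bar>)"
    using abs_ge_zero[of "x - x'"] by linarith
  have "\<bar>p s + max x \<delta> powr - \<alpha> - (p s + max x' \<delta> powr - \<alpha>)\<bar> \<le> \<alpha> * \<delta> powr (- \<alpha> - 1) * \<bar>x - x'\<bar>"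
    using powr_max_lipschitz[OF assms, of x x'] by simp
  also have "\<dots> \<le> max 1 (\<alpha> * \<delta> powr (- \<alpha> - 1)) * (\<bar>x - x'\<bar> + \<bar>y - y'\<bar>)"
    by (intro mult_mono) auto
  finally show "\<bar>p s + max x \<delta> powr - \<alpha> - (p s + max x' \<delta> powr - \<alpha>)\<bar>
      \<le> max 1 (\<alpha> * \<delta> powr (- \<alpha> - 1)) * (\<bar>x - x'\<bar> + \<bar>y - y'\<bar>)" .
qed

lemma truncated_newton_solvable:
  fixes p :: "real \<Rightarrow> real"
  assumes "a \<le> T" and \<alpha>: "0 < \<alpha>" and \<delta>: "0 < \<delta>" and p_cont: "continuous_on UNIV p"
  obtains u v where "continuous_on {a..T} u" "continuous_on {a..T} v" "u a = u0" "v a = v0"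
    "\<And>t. a < t \<Longrightarrow> t < T \<Longrightarrow> (u has_real_derivative v t) (at t)"
    "\<And>t. a < t \<Longrightarrow> t < T \<Longrightarrow> (v has_real_derivative p t + max (u t) \<delta> powr - \<alpha>) (at t)"
proof -
  have F_cont: "continuous_on UNIV (\<lambda>(s, x, y). y)"
    by (simp add: case_prod_beta) (intro continuous_intros)
  have G_cont: "continuous_on UNIV (\<lambda>(s, x, y). p s + max x \<delta> powr - \<alpha>)"
    using \<delta> by (simp add: case_prod_beta)
      (intro continuous_intros continuous_on_compose2[OF p_cont]; simp add: max_def)
  have "0 \<le> max 1 (\<alpha> * \<delta> powr (- \<alpha> - 1))" by simp
  moreover have "((\<lambda>_. c) has_real_derivative 0) (at x)" for c x :: real by simp
  ultimately obtain u v where "continuous_on {a..T} u" "continuous_on {a..T} v" "u a = u0" "v a = v0"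
    "\<And>t. a < t \<Longrightarrow> t < T \<Longrightarrow> (u has_real_derivative 0 + v t) (at t)"
    "\<And>t. a < t \<Longrightarrow> t < T \<Longrightarrow> (v has_real_derivative 0 + (p t + max (u t) \<delta> powr - \<alpha>)) (at t)"
    using ode_pair_solvable[where F = "\<lambda>s x y. y" and G = "\<lambda>s x y. p s + max x \<delta> powr - \<alpha>"
        and f = "\<lambda>_. u0" and f' = "\<lambda>_. 0" and g = "\<lambda>_. v0" and g' = "\<lambda>_. 0",
        OF \<open>a \<le> T\<close> _ F_cont G_cont truncated_force_lipschitz(1)[OF \<alpha> \<delta>]
        truncated_force_lipschitz(2)[where p = p, OF \<alpha> \<delta>] continuous_on_const _ continuous_on_const]
    by blast
  then show ?thesis using that[of u v] by simp
qed

text \<open>On a compact interval a positive solution stays above some \<open>\<delta> > 0\<close>, where the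
  force \<open>u\<^sup>-\<^sup>\<alpha>\<close> agrees with the globally Lipschitz \<open>max u \<delta>\<^sup>-\<^sup>\<alpha>\<close>.\<close>
lemma is_solution_unique_right:
  assumes \<alpha>: "0 < \<alpha>"
    and u: "is_solution \<alpha> p u u' a b" and w: "is_solution \<alpha> p w w' a b"
    and cont: "continuous_on {a..<b} u" "continuous_on {a..<b} u'"
      "continuous_on {a..<b} w" "continuous_on {a..<b} w'"
    and init: "0 < u a" "u a = w a" "u' a = w' a"
    and t: "t \<in> {a..<b}"
  shows "u t = w t \<and> u' t = w' t"
proof -
  have cont_t: "continuous_on {a..t} f" if "continuous_on {a..<b} f" for f
    by (rule continuous_on_subset[OF that]) (use t in auto)
  have pos: "0 < min (u s) (w s)" if "s \<in> {a..t}" for s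
  proof (cases "s = a")
    case False
    then have "s \<in> {a<..<b}" using that t by auto
    then show ?thesis using u w by (simp add: is_solution_def)
  qed (use init in simp)
  obtain \<delta> where \<delta>: "0 < \<delta>" and below: "\<And>s. s \<in> {a..t} \<Longrightarrow> \<delta> \<le> min (u s) (w s)"
    using continuous_on_Icc_positive_lower_bound[OF _ continuous_on_min[OF cont_t[OF cont(1)]
        cont_t[OF cont(3)]] pos] t by auto
  have above_\<delta>: "max (u s) \<delta> = u s" "max (w s) \<delta> = w s" if "s \<in> {a..t}" for s
    using below[OF that] by (simp_all add: max_absorb1)
  have derivs: "(u has_real_derivative 0 + u' s) (at s)" "(w has_real_derivative 0 + w' s) (at s)"
      "(u' has_real_derivative 0 + (p s + max (u s) \<delta> powr - \<alpha>)) (at s)"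
      "(w' has_real_derivative 0 + (p s + max (w s) \<delta> powr - \<alpha>)) (at s)"
    if "a < s" "s < t" for s
  proof -
    have "s \<in> {a<..<b}" using that t by auto
    then have "(u has_real_derivative u' s) (at s)" "(w has_real_derivative w' s) (at s)"
      "(u' has_real_derivative p s + u s powr - \<alpha>) (at s)"
      "(w' has_real_derivative p s + w s powr - \<alpha>) (at s)"
      using u w unfolding is_solution_iff by blast+
    then show "(u has_real_derivative 0 + u' s) (at s)" "(w has_real_derivative 0 + w' s) (at s)"
      "(u' has_real_derivative 0 + (p s + max (u s) \<delta> powr - \<alpha>)) (at s)"
      "(w' has_real_derivative 0 + (p s + max (w s) \<delta> powr - \<alpha>)) (at s)"
      using above_\<delta>[of s] that by simp_all
  qed
  have "0 \<le> max 1 (\<alpha> * \<delta> powr (- \<alpha> - 1))" "t \<in> {a..t}" using t by simp_all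
  then show ?thesis
    using ode_pair_unique[OF _ truncated_force_lipschitz(1)[OF \<alpha> \<delta>]
      truncated_force_lipschitz(2)[where p = p, OF \<alpha> \<delta>]
      cont_t[OF cont(1)] cont_t[OF cont(2)] cont_t[OF cont(3)] cont_t[OF cont(4)]
      derivs(1) derivs(3) derivs(2) derivs(4) init(2) init(3)] by blast
qed

lemma is_solution_continue:
  assumes \<alpha>: "0 < \<alpha>" and u: "is_solution \<alpha> p u u' a b" and c: "a < c" "c < b"
    and w: "is_solution \<alpha> p w w' c d" "c < d" and w_cont: "continuous_on {c..<d} w" "continuous_on {c..<d} w'"
    and init: "w c = u c" "w' c = u' c"
  obtains U U' where "is_solution \<alpha> p U U' a d"
    "\<And>t. a < t \<Longrightarrow> t \<le> c \<Longrightarrow> U t = u t \<and> U' t = u' t"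
    "\<And>t. c < t \<Longrightarrow> t < d \<Longrightarrow> U t = w t \<and> U' t = w' t"
proof -
  define e where "e = min b d"
  have e: "c < e" "e \<le> b" "e \<le> d" using c w by (auto simp: e_def)
  have "{c..<e} \<subseteq> {a<..<b}" using c e by auto
  then have u_cont: "continuous_on {c..<e} u" "continuous_on {c..<e} u'"
    using is_solution_continuous[OF u] by (auto intro: continuous_on_subset)
  have w_cont': "continuous_on {c..<e} w" "continuous_on {c..<e} w'"
    using e by (auto intro: continuous_on_subset[OF w_cont(1)] continuous_on_subset[OF w_cont(2)])
  have "0 < u c" using u c by (simp add: is_solution_def)
  have agree: "u t = w t \<and> u' t = w' t" if "c \<le> t" "t < e" for t
    using is_solution_unique_right[OF \<alpha> is_solution_subinterval[OF u less_imp_le[OF c(1)] e(2)]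
        is_solution_subinterval[OF w(1) order_refl e(3)] u_cont w_cont' \<open>0 < u c\<close> init[symmetric]] that
    by simp
  show ?thesis
  proof (rule that)
    show "is_solution \<alpha> p (\<lambda>t. if t < e then u t else w t) (\<lambda>t. if t < e then u' t else w' t) a d"
      using is_solution_glue[OF is_solution_subinterval[OF u order_refl e(2)] w(1) e(1)] agree by simp
    show "(if t < e then u t else w t) = u t \<and> (if t < e then u' t else w' t) = u' t" if "t \<le> c" for t
      using that e by simp
    show "(if t < e then u t else w t) = w t \<and> (if t < e then u' t else w' t) = w' t" if "c < t" for t
      using that agree by simp
  qed
qed

lemma is_solution_not_beyond_zero:
  assumes w: "is_solution \<alpha> p w w' a b" and c: "a < c" "c < b"
    and u: "(u \<longlongrightarrow> 0) (at_left c)" and agree: "\<And>t. a < t \<Longrightarrow> t < c \<Longrightarrow> w t = u t"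
  shows False
proof -
  have "0 < w c" "isCont w c"
    using w c by (auto simp: is_solution_def intro: DERIV_isCont)
  then have "(w \<longlongrightarrow> w c) (at_left c)" by (simp add: isCont_def filterlim_at_split)
  moreover have "\<forall>\<^sub>F t in at_left c. w t = u t"
    using c agree by (auto simp: eventually_at_left_field intro!: exI[of _ a])
  ultimately have "(u \<longlongrightarrow> w c) (at_left c)" by (rule Lim_transform_eventually)
  with u have "w c = 0" using tendsto_unique[OF trivial_limit_at_left_real] by blast
  with \<open>0 < w c\<close> show False by simp
qed

section \<open>Hodographs\<close>

lemma hodograph_speed_lipschitz:
  assumes m: "0 < m" and L: "0 \<le> L"
  shows "\<bar>1 / sqrt (2 * max y m) - 1 / sqrt (2 * max y' m)\<bar>
      \<le> max L (1 / (2 * m * sqrt (2 * m))) * (\<bar>x - x'\<bar> + \<bar>y - y'\<bar>)"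
proof -
  have "\<bar>1 / sqrt (2 * max y m) - 1 / sqrt (2 * max y' m)\<bar> \<le> 1 / (2 * m * sqrt (2 * m)) * \<bar>y - y'\<bar>"
    by (rule inverse_sqrt_max_lipschitz[OF m])
  also have "\<dots> \<le> max L (1 / (2 * m * sqrt (2 * m))) * (\<bar>x - x'\<bar> + \<bar>y - y'\<bar>)"
    using m by (intro mult_mono) (auto simp: le_max_iff_disj)
  finally show ?thesis .
qed

lemma hodograph_force_lipschitz:
  fixes p :: "real \<Rightarrow> real"
  assumes p: "L-lipschitz_on UNIV p" and \<kappa>: "\<bar>\<kappa>\<bar> = 1"
  shows "\<bar>\<kappa> * p x - \<kappa> * p x'\<bar> \<le> max L C * (\<bar>x - x'\<bar> + \<bar>y - y'\<bar>)"
proof -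
  have "\<bar>\<kappa> * p x - \<kappa> * p x'\<bar> = dist (p x) (p x')"
    using \<kappa> by (simp add: right_diff_distrib[symmetric] abs_mult dist_real_def)
  also have "\<dots> \<le> L * \<bar>x - x'\<bar>"
    using lipschitz_onD[OF p, of x x'] by (simp add: dist_real_def)
  also have "\<dots> \<le> max L C * (\<bar>x - x'\<bar> + \<bar>y - y'\<bar>)"
    using lipschitz_on_nonneg[OF p] by (intro mult_mono) auto
  finally show ?thesis .
qed

text \<open>A hodograph describes a solution in terms of the positions it passes, which is possible
  where it is monotone: \<open>\<tau> x\<close> is the time at which it passes the position \<open>d + \<kappa> x\<close> (with
  \<open>\<kappa> = \<plusminus>1\<close> the direction of motion) and \<open>W x = u'(\<tau> x)\<^sup>2 / 2\<close> its kinetic energy there.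
  The singular force only enters through the term \<open>\<kappa> (d + \<kappa> x)\<^sup>-\<^sup>\<alpha>\<close>, which is integrable up to
  the position \<open>0\<close>.\<close>
definition is_hodograph ::
  "real \<Rightarrow> (real \<Rightarrow> real) \<Rightarrow> real \<Rightarrow> real \<Rightarrow> real \<Rightarrow> (real \<Rightarrow> real) \<Rightarrow> (real \<Rightarrow> real) \<Rightarrow> bool" where
  "is_hodograph \<alpha> p \<kappa> d X \<tau> W \<longleftrightarrow> continuous_on {0..X} \<tau> \<and> continuous_on {0..X} W \<and>
     (\<forall>x\<in>{0<..<X}. (\<tau> has_real_derivative 1 / sqrt (2 * W x)) (at x) \<and>
        (W has_real_derivative \<kappa> * (p (\<tau> x) + (d + \<kappa> * x) powr - \<alpha>)) (at x))"

lemma is_hodograph_subinterval: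
  "is_hodograph \<alpha> p \<kappa> d X \<tau> W \<Longrightarrow> Y \<le> X \<Longrightarrow> is_hodograph \<alpha> p \<kappa> d Y \<tau> W"
  by (auto simp: is_hodograph_def intro: continuous_on_subset)

lemma truncated_hodograph_solvable:
  fixes p g g' :: "real \<Rightarrow> real"
  assumes X: "0 \<le> X" and p: "L-lipschitz_on UNIV p" and \<kappa>: "\<bar>\<kappa>\<bar> = 1" and m: "0 < m"
    and g_cont: "continuous_on {0..X} g" and g_deriv: "\<And>x. 0 < x \<Longrightarrow> x < X \<Longrightarrow> (g has_real_derivative g' x) (at x)"
  obtains \<tau> W where "continuous_on {0..X} \<tau>" "continuous_on {0..X} W" "\<tau> 0 = s0" "W 0 = g 0"
    "\<And>x. 0 < x \<Longrightarrow> x < X \<Longrightarrow> (\<tau> has_real_derivative 1 / sqrt (2 * max (W x) m)) (at x)"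
    "\<And>x. 0 < x \<Longrightarrow> x < X \<Longrightarrow> (W has_real_derivative g' x + \<kappa> * p (\<tau> x)) (at x)"
proof -
  have F_cont: "continuous_on UNIV (\<lambda>(s, x, y). 1 / sqrt (2 * max y m))"
    using m by (auto simp: case_prod_beta intro!: continuous_intros)
  have G_cont: "continuous_on UNIV (\<lambda>(s, x, y). \<kappa> * p x)"
    by (simp add: case_prod_beta) (intro continuous_intros continuous_on_compose2[OF
        lipschitz_on_continuous_on[OF p]]; simp)
  have "0 \<le> max L (1 / (2 * m * sqrt (2 * m)))" using m by (simp add: le_max_iff_disj)
  moreover have "((\<lambda>_. s0) has_real_derivative 0) (at x)" for x by simp
  ultimately obtain \<tau> W where "continuous_on {0..X} \<tau>" "continuous_on {0..X} W" "\<tau> 0 = s0" "W 0 = g 0"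
    "\<And>x. 0 < x \<Longrightarrow> x < X \<Longrightarrow> (\<tau> has_real_derivative 0 + 1 / sqrt (2 * max (W x) m)) (at x)"
    "\<And>x. 0 < x \<Longrightarrow> x < X \<Longrightarrow> (W has_real_derivative g' x + \<kappa> * p (\<tau> x)) (at x)"
    using ode_pair_solvable[where F = "\<lambda>s x y. 1 / sqrt (2 * max y m)" and G = "\<lambda>s x y. \<kappa> * p x"
        and f = "\<lambda>_. s0" and f' = "\<lambda>_. 0",
        OF X _ F_cont G_cont hodograph_speed_lipschitz[OF m lipschitz_on_nonneg[OF p]]
        hodograph_force_lipschitz[OF p \<kappa>] continuous_on_const _ g_cont g_deriv]
    by blast
  then show ?thesis using that[of \<tau> W] by simp
qed

text \<open>The a priori bound \<open>lower\<close> keeps the energy \<open>W\<close> above \<open>m\<close>, so that the truncation of the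
  speed \<open>1 / sqrt (2 W)\<close> at \<open>m\<close> which makes the system globally Lipschitz is never active.\<close>
lemma hodograph_solvable:
  fixes p :: "real \<Rightarrow> real"
  assumes \<alpha>: "\<alpha> < 1" and p: "L-lipschitz_on UNIV p"
    and \<kappa>: "\<kappa> = 1 \<or> \<kappa> = -1" and X: "0 \<le> X" and m: "0 < m"
    and d: "0 \<le> d" "0 \<le> d + \<kappa> * X"
    and P: "\<And>t. P \<le> \<kappa> * p t"
    and lower: "\<And>x. x \<in> {0..X} \<Longrightarrow>
      m \<le> W0 + ((d + \<kappa> * x) powr (1 - \<alpha>) - d powr (1 - \<alpha>)) / (1 - \<alpha>) + P * x"
  obtains \<tau> W where "is_hodograph \<alpha> p \<kappa> d X \<tau> W" "\<tau> 0 = s0" "W 0 = W0" "\<And>x. x \<in> {0..X} \<Longrightarrow> m \<le> W x"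
proof -
  have position: "0 \<le> d + \<kappa> * x" if "x \<in> {0..X}" for x using \<kappa> d that by auto
  have position_pos: "0 < d + \<kappa> * x" if "0 < x" "x < X" for x using \<kappa> d that by auto
  define g where "g x = W0 + ((d + \<kappa> * x) powr (1 - \<alpha>) - d powr (1 - \<alpha>)) / (1 - \<alpha>)" for x
  have g_cont: "continuous_on {0..X} g"
    unfolding g_def using \<alpha> position by (intro continuous_intros continuous_on_powr') auto
  have g_deriv: "(g has_real_derivative \<kappa> * (d + \<kappa> * x) powr - \<alpha>) (at x)" if "0 < x" "x < X" for x
  proof -
    have "g = (\<lambda>x. W0 - d powr (1 - \<alpha>) / (1 - \<alpha>) + (d + \<kappa> * x) powr (1 - \<alpha>) / (1 - \<alpha>))"
      by (auto simp: g_def diff_divide_distrib)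
    then show ?thesis using \<alpha> position_pos[OF that] by (auto intro!: derivative_eq_intros)
  qed
  have "\<bar>\<kappa>\<bar> = 1" using \<kappa> by auto
  then obtain \<tau> W where \<tau>_cont: "continuous_on {0..X} \<tau>" and W_cont: "continuous_on {0..X} W"
    and init: "\<tau> 0 = s0" "W 0 = g 0"
    and \<tau>_deriv: "\<And>x. 0 < x \<Longrightarrow> x < X \<Longrightarrow> (\<tau> has_real_derivative 1 / sqrt (2 * max (W x) m)) (at x)"
    and W_deriv: "\<And>x. 0 < x \<Longrightarrow> x < X \<Longrightarrow>
      (W has_real_derivative \<kappa> * (d + \<kappa> * x) powr - \<alpha> + \<kappa> * p (\<tau> x)) (at x)"
    using truncated_hodograph_solvable[OF X p _ m g_cont g_deriv] by blast
  have W_lower: "m \<le> W x" if x: "x \<in> {0..X}" for x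
  proof -
    have "(g x + P * x) - (g 0 + P * 0) \<le> W x - W 0"
      by (rule increment_le_by_derivative[of 0 x "\<lambda>y. g y + P * y" W
            "\<lambda>y. \<kappa> * (d + \<kappa> * y) powr - \<alpha> + P" "\<lambda>y. \<kappa> * (d + \<kappa> * y) powr - \<alpha> + \<kappa> * p (\<tau> y)"])
        (use x P in \<open>auto intro!: continuous_intros derivative_eq_intros g_deriv W_deriv
          continuous_on_subset[OF g_cont] continuous_on_subset[OF W_cont]\<close>)
    then have "g x + P * x \<le> W x" using init by (simp add: g_def)
    with lower[OF x] show ?thesis by (simp add: g_def)
  qed
  show ?thesis
  proof (rule that[of \<tau> W, OF _ init(1) _ W_lower])
    show "W 0 = W0" using init by (simp add: g_def)
    have "max (W x) m = W x" if "0 < x" "x < X" for x using W_lower[of x] that by simp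
    then show "is_hodograph \<alpha> p \<kappa> d X \<tau> W"
      using \<tau>_cont W_cont \<tau>_deriv W_deriv by (simp add: is_hodograph_def algebra_simps)
  qed
qed

lemma hodograph_unique:
  fixes p :: "real \<Rightarrow> real"
  assumes p: "L-lipschitz_on UNIV p" and \<kappa>: "\<bar>\<kappa>\<bar> = 1" and m: "0 < m"
    and \<tau>W: "is_hodograph \<alpha> p \<kappa> d X \<tau> W" and \<sigma>A: "is_hodograph \<alpha> p \<kappa> d X \<sigma> A"
    and lower: "\<And>x. x \<in> {0..X} \<Longrightarrow> m \<le> W x" "\<And>x. x \<in> {0..X} \<Longrightarrow> m \<le> A x"
    and init: "\<tau> 0 = \<sigma> 0" "W 0 = A 0" and x: "x \<in> {0..X}"
  shows "\<tau> x = \<sigma> x \<and> W x = A x"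
proof -
  have derivs: "(\<tau> has_real_derivative 0 + 1 / sqrt (2 * max (W s) m)) (at s)"
      "(\<sigma> has_real_derivative 0 + 1 / sqrt (2 * max (A s) m)) (at s)"
      "(W has_real_derivative \<kappa> * (d + \<kappa> * s) powr - \<alpha> + \<kappa> * p (\<tau> s)) (at s)"
      "(A has_real_derivative \<kappa> * (d + \<kappa> * s) powr - \<alpha> + \<kappa> * p (\<sigma> s)) (at s)" if "0 < s" "s < X" for s
  proof -
    have "max (W s) m = W s" "max (A s) m = A s" using lower[of s] that by simp_all
    moreover from \<tau>W \<sigma>A that
    have "(\<tau> has_real_derivative 1 / sqrt (2 * W s)) (at s)" "(\<sigma> has_real_derivative 1 / sqrt (2 * A s)) (at s)"
      "(W has_real_derivative \<kappa> * (p (\<tau> s) + (d + \<kappa> * s) powr - \<alpha>)) (at s)"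
      "(A has_real_derivative \<kappa> * (p (\<sigma> s) + (d + \<kappa> * s) powr - \<alpha>)) (at s)"
      by (simp_all add: is_hodograph_def)
    ultimately show "(\<tau> has_real_derivative 0 + 1 / sqrt (2 * max (W s) m)) (at s)"
      "(\<sigma> has_real_derivative 0 + 1 / sqrt (2 * max (A s) m)) (at s)"
      "(W has_real_derivative \<kappa> * (d + \<kappa> * s) powr - \<alpha> + \<kappa> * p (\<tau> s)) (at s)"
      "(A has_real_derivative \<kappa> * (d + \<kappa> * s) powr - \<alpha> + \<kappa> * p (\<sigma> s)) (at s)"
      by (simp_all add: distrib_left add.commute)
  qed
  have "0 \<le> max L (1 / (2 * m * sqrt (2 * m)))" using m by (simp add: le_max_iff_disj)
  moreover have "continuous_on {0..X} \<tau>" "continuous_on {0..X} W" "continuous_on {0..X} \<sigma>" "continuous_on {0..X} A"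
    using \<tau>W \<sigma>A by (simp_all add: is_hodograph_def)
  ultimately show ?thesis
    using ode_pair_unique[OF _ hodograph_speed_lipschitz[OF m lipschitz_on_nonneg[OF p]]
        hodograph_force_lipschitz[OF p \<kappa>] _ _ _ _ derivs(1) derivs(3) derivs(2) derivs(4) init x]
    by blast
qed

lemma solution_of_hodograph:
  fixes \<tau> W :: "real \<Rightarrow> real"
  assumes X: "0 < X" and \<tau>W: "is_hodograph \<alpha> p \<kappa> d X \<tau> W" and W_pos: "\<And>x. x \<in> {0..X} \<Longrightarrow> 0 < W x"
    and \<kappa>: "\<kappa> * \<kappa> = 1" and position: "\<And>x. 0 < x \<Longrightarrow> x < X \<Longrightarrow> 0 < d + \<kappa> * x"
  obtains u v where "\<tau> 0 < \<tau> X" "is_solution \<alpha> p u v (\<tau> 0) (\<tau> X)"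
    "continuous_on {\<tau> 0..\<tau> X} u" "continuous_on {\<tau> 0..\<tau> X} v"
    "u (\<tau> 0) = d" "v (\<tau> 0) = \<kappa> * sqrt (2 * W 0)" "u (\<tau> X) = d + \<kappa> * X"
    "\<And>t. t \<in> {\<tau> 0..\<tau> X} \<Longrightarrow> 0 < \<kappa> * v t"
proof -
  have \<tau>_cont: "continuous_on {0..X} \<tau>" and W_cont: "continuous_on {0..X} W"
    and \<tau>_deriv: "\<And>x. 0 < x \<Longrightarrow> x < X \<Longrightarrow> (\<tau> has_real_derivative 1 / sqrt (2 * W x)) (at x)"
    and W_deriv: "\<And>x. 0 < x \<Longrightarrow> x < X \<Longrightarrow> (W has_real_derivative \<kappa> * (p (\<tau> x) + (d + \<kappa> * x) powr - \<alpha>)) (at x)"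
    using \<tau>W by (auto simp: is_hodograph_def)
  obtain \<sigma> where \<tau>_mono: "\<tau> 0 < \<tau> X" and \<sigma>_cont: "continuous_on {\<tau> 0..\<tau> X} \<sigma>"
    and \<sigma>_range: "\<And>t. t \<in> {\<tau> 0..\<tau> X} \<Longrightarrow> \<sigma> t \<in> {0..X} \<and> \<tau> (\<sigma> t) = t"
    and \<sigma>_\<tau>: "\<And>x. x \<in> {0..X} \<Longrightarrow> \<sigma> (\<tau> x) = x"
    and \<sigma>_deriv: "\<And>t. \<tau> 0 < t \<Longrightarrow> t < \<tau> X \<Longrightarrow>
      0 < \<sigma> t \<and> \<sigma> t < X \<and> (\<sigma> has_real_derivative inverse (1 / sqrt (2 * W (\<sigma> t)))) (at t)"
    using positive_derivative_inverse[OF X \<tau>_cont \<tau>_deriv] W_pos by auto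
  define u where "u t = d + \<kappa> * \<sigma> t" for t
  define v where "v t = \<kappa> * sqrt (2 * W (\<sigma> t))" for t
  have W\<sigma>_cont: "continuous_on {\<tau> 0..\<tau> X} (\<lambda>t. W (\<sigma> t))"
    using \<sigma>_range by (intro continuous_on_compose2[OF W_cont \<sigma>_cont]) auto
  have "is_solution \<alpha> p u v (\<tau> 0) (\<tau> X)"
    unfolding is_solution_iff
  proof (intro ballI conjI)
    fix t assume "t \<in> {\<tau> 0<..<\<tau> X}"
    then have t: "\<tau> 0 < t" "t < \<tau> X" by auto
    note \<sigma>t = \<sigma>_deriv[OF t]
    have W_pos_t: "0 < W (\<sigma> t)" using W_pos \<sigma>t by auto
    show "0 < u t" using position \<sigma>t by (simp add: u_def)
    have \<sigma>_deriv_t: "(\<sigma> has_real_derivative sqrt (2 * W (\<sigma> t))) (at t)" using \<sigma>t by simp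
    then show "(u has_real_derivative v t) (at t)"
      unfolding u_def v_def by (auto intro!: derivative_eq_intros)
    have "((\<lambda>t. W (\<sigma> t)) has_real_derivative
        \<kappa> * (p t + u t powr - \<alpha>) * sqrt (2 * W (\<sigma> t))) (at t)"
      using DERIV_chain2[OF W_deriv \<sigma>_deriv_t] \<sigma>t \<sigma>_range[of t] t by (simp add: u_def)
    then have "(v has_real_derivative \<kappa> * (inverse (sqrt (2 * W (\<sigma> t))) / 2
        * (2 * (\<kappa> * (p t + u t powr - \<alpha>) * sqrt (2 * W (\<sigma> t)))))) (at t)"
      unfolding v_def using W_pos_t by (auto intro!: derivative_eq_intros)
    moreover have "\<kappa> * (inverse (sqrt (2 * W (\<sigma> t))) / 2
        * (2 * (\<kappa> * (p t + u t powr - \<alpha>) * sqrt (2 * W (\<sigma> t))))) = (\<kappa> * \<kappa>) * (p t + u t powr - \<alpha>)"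
      using W_pos_t by (simp add: field_simps)
    ultimately show "(v has_real_derivative p t + u t powr - \<alpha>) (at t)" using \<kappa> by (simp only: mult_1)
  qed
  moreover have "0 < \<kappa> * v t" if "t \<in> {\<tau> 0..\<tau> X}" for t
    using W_pos \<sigma>_range[OF that] \<kappa> by (simp add: v_def mult.assoc[symmetric])
  moreover have "continuous_on {\<tau> 0..\<tau> X} u" "continuous_on {\<tau> 0..\<tau> X} v"
    unfolding u_def v_def by (intro continuous_intros \<sigma>_cont W\<sigma>_cont)+
  moreover have "u (\<tau> 0) = d" "v (\<tau> 0) = \<kappa> * sqrt (2 * W 0)" "u (\<tau> X) = d + \<kappa> * X"
    using \<sigma>_\<tau>[of 0] \<sigma>_\<tau>[of X] X by (simp_all add: u_def v_def)
  ultimately show ?thesis using that[OF \<tau>_mono] by blast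
qed

lemma solution_via_hodograph:
  fixes p :: "real \<Rightarrow> real"
  assumes \<alpha>: "\<alpha> < 1" and p: "L-lipschitz_on UNIV p"
    and \<kappa>: "\<kappa> = 1 \<or> \<kappa> = -1" and X: "0 < X" and m: "0 < m"
    and d: "0 \<le> d" "0 \<le> d + \<kappa> * X"
    and P: "\<And>t. P \<le> \<kappa> * p t"
    and lower: "\<And>x. x \<in> {0..X} \<Longrightarrow>
      m \<le> W0 + ((d + \<kappa> * x) powr (1 - \<alpha>) - d powr (1 - \<alpha>)) / (1 - \<alpha>) + P * x"
  obtains T u v where "s0 < T" "is_solution \<alpha> p u v s0 T"
    "continuous_on {s0..T} u" "continuous_on {s0..T} v"
    "u s0 = d" "v s0 = \<kappa> * sqrt (2 * W0)" "u T = d + \<kappa> * X"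
    "\<And>t. t \<in> {s0..T} \<Longrightarrow> 0 < \<kappa> * v t"
proof -
  obtain \<tau> W where \<tau>W: "is_hodograph \<alpha> p \<kappa> d X \<tau> W"
    and init: "\<tau> 0 = s0" "W 0 = W0" and W_lower: "\<And>x. x \<in> {0..X} \<Longrightarrow> m \<le> W x"
    using hodograph_solvable[OF \<alpha> p \<kappa> less_imp_le[OF X] m d P lower] by blast
  have W_pos: "0 < W x" if "x \<in> {0..X}" for x using W_lower[OF that] m by simp
  have \<kappa>_square: "\<kappa> * \<kappa> = 1" using \<kappa> by auto
  have position: "0 < d + \<kappa> * x" if "0 < x" "x < X" for x using \<kappa> d that by auto
  obtain u v where "\<tau> 0 < \<tau> X" "is_solution \<alpha> p u v (\<tau> 0) (\<tau> X)"
    "continuous_on {\<tau> 0..\<tau> X} u" "continuous_on {\<tau> 0..\<tau> X} v"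
    "u (\<tau> 0) = d" "v (\<tau> 0) = \<kappa> * sqrt (2 * W 0)" "u (\<tau> X) = d + \<kappa> * X"
    "\<And>t. t \<in> {\<tau> 0..\<tau> X} \<Longrightarrow> 0 < \<kappa> * v t"
    using solution_of_hodograph[OF X \<tau>W W_pos \<kappa>_square position] by blast
  then show ?thesis using that unfolding init by blast
qed

lemma half_square_of_inverse_has_derivative:
  assumes "(w' has_real_derivative D) (at (\<sigma> x))" "(\<sigma> has_real_derivative inverse (w' (\<sigma> x))) (at x)"
    and "w' (\<sigma> x) \<noteq> 0"
  shows "((\<lambda>x. (w' (\<sigma> x))\<^sup>2 / 2) has_real_derivative D) (at x)"
proof -
  have "((\<lambda>x. w' (\<sigma> x)) has_real_derivative D * inverse (w' (\<sigma> x))) (at x)"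
    using DERIV_chain2[OF assms(1,2)] .
  then have "((\<lambda>x. (w' (\<sigma> x))\<^sup>2 / 2) has_real_derivative 2 * w' (\<sigma> x) * (D * inverse (w' (\<sigma> x))) / 2) (at x)"
    by (auto intro!: derivative_eq_intros simp: power2_eq_square)
  then show ?thesis using assms(3) by (simp add: field_simps)
qed

lemma hodograph_of_increasing_solution:
  assumes e: "t0 < e" and w: "is_solution \<alpha> p w w' t0 e"
    and w_cont: "continuous_on {t0..e} w" and w'_cont: "continuous_on {t0..e} w'"
    and w0: "w t0 = 0" and c: "0 < c" "\<And>t. t \<in> {t0..e} \<Longrightarrow> c \<le> w' t"
  obtains \<sigma> A where "0 < w e" "is_hodograph \<alpha> p 1 0 (w e) \<sigma> A"
    "\<sigma> 0 = t0" "A 0 = (w' t0)\<^sup>2 / 2" "\<And>x. x \<in> {0..w e} \<Longrightarrow> c\<^sup>2 / 2 \<le> A x"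
    "\<And>x. 0 < x \<Longrightarrow> x \<le> w e \<Longrightarrow> t0 < \<sigma> x \<and> \<sigma> x \<le> e \<and> w (\<sigma> x) = x \<and> w' (\<sigma> x) = sqrt (2 * A x)"
proof -
  have w_deriv: "(w has_real_derivative w' t) (at t)"
    and w'_deriv: "(w' has_real_derivative p t + w t powr - \<alpha>) (at t)" if "t0 < t" "t < e" for t
    using w that by (auto simp: is_solution_iff)
  have w'_pos: "0 < w' t" if "t0 < t" "t < e" for t using c(1) c(2)[of t] that by simp
  obtain \<sigma> where w_mono: "w t0 < w e" and \<sigma>_cont: "continuous_on {w t0..w e} \<sigma>"
    and \<sigma>_range: "\<And>x. x \<in> {w t0..w e} \<Longrightarrow> \<sigma> x \<in> {t0..e} \<and> w (\<sigma> x) = x"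
    and \<sigma>_w: "\<And>t. t \<in> {t0..e} \<Longrightarrow> \<sigma> (w t) = t"
    and \<sigma>_deriv: "\<And>x. w t0 < x \<Longrightarrow> x < w e \<Longrightarrow>
      t0 < \<sigma> x \<and> \<sigma> x < e \<and> (\<sigma> has_real_derivative inverse (w' (\<sigma> x))) (at x)"
    using positive_derivative_inverse[OF e w_cont w_deriv w'_pos] by blast
  define A where "A x = (w' (\<sigma> x))\<^sup>2 / 2" for x
  have w'_\<sigma>_lower: "c \<le> w' (\<sigma> x)" if "x \<in> {0..w e}" for x
    using \<sigma>_range[of x] that w0 by (intro c(2)) auto
  have w'_\<sigma>: "w' (\<sigma> x) = sqrt (2 * A x)" if "x \<in> {0..w e}" for x
    using w'_\<sigma>_lower[OF that] c(1) by (simp add: A_def)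
  have A_deriv: "(A has_real_derivative p (\<sigma> x) + x powr - \<alpha>) (at x)" if x: "0 < x" "x < w e" for x
  proof -
    note \<sigma>x = \<sigma>_deriv[unfolded w0, OF x]
    have "w (\<sigma> x) = x" using \<sigma>_range[of x] x w0 by auto
    moreover have "0 < w' (\<sigma> x)" using w'_\<sigma>_lower[of x] x c(1) by simp
    ultimately show ?thesis
      unfolding A_def using half_square_of_inverse_has_derivative[OF w'_deriv \<sigma>x[THEN conjunct2, THEN conjunct2]] \<sigma>x
      by simp
  qed
  show ?thesis
  proof
    show "0 < w e" using w_mono w0 by simp
    have "continuous_on {0..w e} A"
      unfolding A_def using \<sigma>_range w0
      by (intro continuous_intros continuous_on_compose2[OF w'_cont \<sigma>_cont[unfolded w0]]) auto
    moreover have "(\<sigma> has_real_derivative 1 / sqrt (2 * A x)) (at x)" if "0 < x" "x < w e" for x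
      using \<sigma>_deriv[unfolded w0, OF that] w'_\<sigma>[of x] that by (simp add: divide_inverse)
    ultimately show "is_hodograph \<alpha> p 1 0 (w e) \<sigma> A"
      using \<sigma>_cont w0 A_deriv by (simp add: is_hodograph_def)
    show "\<sigma> 0 = t0" "A 0 = (w' t0)\<^sup>2 / 2" using \<sigma>_w[of t0] e w0 by (auto simp: A_def)
    show "c\<^sup>2 / 2 \<le> A x" if "x \<in> {0..w e}" for x
      using w'_\<sigma>_lower[OF that] c by (auto simp: A_def intro: power_mono)
    show "t0 < \<sigma> x \<and> \<sigma> x \<le> e \<and> w (\<sigma> x) = x \<and> w' (\<sigma> x) = sqrt (2 * A x)" if "0 < x" "x \<le> w e" for x
    proof -
      have "\<sigma> x \<in> {t0..e}" "w (\<sigma> x) = x" using \<sigma>_range[of x] that w0 by auto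
      moreover have "\<sigma> x \<noteq> t0" using \<open>w (\<sigma> x) = x\<close> that w0 by auto
      ultimately show ?thesis using w'_\<sigma>[of x] that by auto
    qed
  qed
qed

text \<open>\<open>w\<close> is increasing near \<open>t\<^sub>0\<close>; its hodograph starts at \<open>t\<^sub>0\<close> because \<open>w\<close> and \<open>w'\<close> extend
  continuously to \<open>t\<^sub>0\<close> by their limits.\<close>
lemma hodograph_of_solution:
  assumes w: "is_solution \<alpha> p w w' t0 t2" and "t0 < t2"
    and w_lim: "(w \<longlongrightarrow> 0) (at_right t0)" and w'_lim: "(w' \<longlongrightarrow> v0) (at_right t0)" and v0: "0 < v0"
  obtains X \<sigma> A where "0 < X" "is_hodograph \<alpha> p 1 0 X \<sigma> A"
    "\<sigma> 0 = t0" "A 0 = v0\<^sup>2 / 2" "\<And>x. x \<in> {0..X} \<Longrightarrow> v0\<^sup>2 / 8 \<le> A x"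
    "\<And>x. 0 < x \<Longrightarrow> x \<le> X \<Longrightarrow> t0 < \<sigma> x \<and> \<sigma> x < t2 \<and> w (\<sigma> x) = x \<and> w' (\<sigma> x) = sqrt (2 * A x)"
proof -
  obtain b where b: "t0 < b" "\<And>t. t0 < t \<Longrightarrow> t < b \<Longrightarrow> v0 / 2 < w' t"
    using order_tendstoD(1)[OF w'_lim, of "v0 / 2"] v0 by (auto simp: eventually_at_right_field)
  define e where "e = (t0 + min b t2) / 2"
  have e: "t0 < e" "e < b" "e < t2" using b \<open>t0 < t2\<close> by (auto simp: e_def)
  define w0 where "w0 = w(t0 := 0)"
  define w0' where "w0' = w'(t0 := v0)"
  have sol: "is_solution \<alpha> p w0 w0' t0 e"
    using is_solution_subinterval[OF w order_refl less_imp_le[OF e(3)]]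
    by (rule is_solution_cong) (auto simp: w0_def w0'_def)
  have speed: "v0 / 2 \<le> w0' t" if "t \<in> {t0..e}" for t
    using b(2)[of t] that e v0 by (cases "t = t0") (auto simp: w0'_def)
  have "w0 t0 = 0" "0 < v0 / 2" using v0 by (simp_all add: w0_def)
  from hodograph_of_increasing_solution[OF e(1) sol
      continuous_on_Icc_fun_upd_left[OF is_solution_continuous(1)[OF w] w_lim e(1,3), folded w0_def]
      continuous_on_Icc_fun_upd_left[OF is_solution_continuous(2)[OF w] w'_lim e(1,3), folded w0'_def]
      this speed]
  obtain \<sigma> A where "0 < w0 e" "is_hodograph \<alpha> p 1 0 (w0 e) \<sigma> A"
    and init: "\<sigma> 0 = t0" "A 0 = (w0' t0)\<^sup>2 / 2"
    and lower: "\<And>x. x \<in> {0..w0 e} \<Longrightarrow> (v0 / 2)\<^sup>2 / 2 \<le> A x"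
    and inverse: "\<And>x. 0 < x \<Longrightarrow> x \<le> w0 e \<Longrightarrow>
      t0 < \<sigma> x \<and> \<sigma> x \<le> e \<and> w0 (\<sigma> x) = x \<and> w0' (\<sigma> x) = sqrt (2 * A x)"
    by blast
  show ?thesis
  proof (rule that)
    show "A 0 = v0\<^sup>2 / 2" using init(2) by (simp add: w0'_def)
    show "v0\<^sup>2 / 8 \<le> A x" if "x \<in> {0..w0 e}" for x using lower[OF that] by (simp add: power_divide)
    show "t0 < \<sigma> x \<and> \<sigma> x < t2 \<and> w (\<sigma> x) = x \<and> w' (\<sigma> x) = sqrt (2 * A x)"
      if "0 < x" "x \<le> w0 e" for x
      using inverse[OF that] e by (auto simp: w0_def w0'_def)
  qed fact+
qed

lemma solutions_from_zero_meet:
  fixes p :: "real \<Rightarrow> real"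
  assumes p: "L-lipschitz_on UNIV p"
    and u: "is_solution \<alpha> p u u' t0 t1" "t0 < t1" "(u \<longlongrightarrow> 0) (at_right t0)" "(u' \<longlongrightarrow> v0) (at_right t0)"
    and w: "is_solution \<alpha> p w w' t0 t2" "t0 < t2" "(w \<longlongrightarrow> 0) (at_right t0)" "(w' \<longlongrightarrow> v0) (at_right t0)"
    and v0: "0 < v0" and t: "t0 < t"
  obtains s where "t0 < s" "s \<le> t" "s < t1" "s < t2" "u s = w s" "u' s = w' s"
proof -
  obtain Xu \<sigma>u Au where "0 < Xu" and hodograph_u: "is_hodograph \<alpha> p 1 0 Xu \<sigma>u Au"
    and init_u: "\<sigma>u 0 = t0" "Au 0 = v0\<^sup>2 / 2" and lower_u: "\<And>x. x \<in> {0..Xu} \<Longrightarrow> v0\<^sup>2 / 8 \<le> Au x"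
    and inverse_u: "\<And>x. 0 < x \<Longrightarrow> x \<le> Xu \<Longrightarrow> t0 < \<sigma>u x \<and> \<sigma>u x < t1 \<and> u (\<sigma>u x) = x \<and> u' (\<sigma>u x) = sqrt (2 * Au x)"
    using hodograph_of_solution[OF u v0] by blast
  obtain Xw \<sigma>w Aw where "0 < Xw" and hodograph_w: "is_hodograph \<alpha> p 1 0 Xw \<sigma>w Aw"
    and init_w: "\<sigma>w 0 = t0" "Aw 0 = v0\<^sup>2 / 2" and lower_w: "\<And>x. x \<in> {0..Xw} \<Longrightarrow> v0\<^sup>2 / 8 \<le> Aw x"
    and inverse_w: "\<And>x. 0 < x \<Longrightarrow> x \<le> Xw \<Longrightarrow> t0 < \<sigma>w x \<and> \<sigma>w x < t2 \<and> w (\<sigma>w x) = x \<and> w' (\<sigma>w x) = sqrt (2 * Aw x)"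
    using hodograph_of_solution[OF w v0] by blast
  define X where "X = min Xu Xw"
  have X: "0 < X" "X \<le> Xu" "X \<le> Xw" using \<open>0 < Xu\<close> \<open>0 < Xw\<close> by (auto simp: X_def)
  obtain x where x: "0 < x" "x \<le> X" "\<sigma>u x \<le> t"
  proof (cases "\<sigma>u X \<le> t")
    case False
    have "continuous_on {0..X} \<sigma>u" using is_hodograph_subinterval[OF hodograph_u X(2)] by (simp add: is_hodograph_def)
    then obtain x where "0 \<le> x" "x \<le> X" "\<sigma>u x = t"
      using IVT'[of \<sigma>u 0 t X] False X t init_u by auto
    then show ?thesis using that[of x] t init_u by (cases "x = 0") auto
  qed (use X in auto)
  have "0 < v0\<^sup>2 / 8" using v0 by simp
  from hodograph_unique[OF p _ this is_hodograph_subinterval[OF hodograph_u X(2)]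
      is_hodograph_subinterval[OF hodograph_w X(3)]] lower_u lower_w X x init_u init_w
  have "\<sigma>u x = \<sigma>w x \<and> Au x = Aw x" by simp
  then show ?thesis
    using that[of "\<sigma>u x"] inverse_u[of x] inverse_w[of x] x X by auto
qed

lemma solutions_from_zero_agree:
  fixes p :: "real \<Rightarrow> real"
  assumes p: "L-lipschitz_on UNIV p" and \<alpha>: "0 < \<alpha>"
    and u: "is_solution \<alpha> p u u' t0 t1" "t0 < t1" "(u \<longlongrightarrow> 0) (at_right t0)" "(u' \<longlongrightarrow> v0) (at_right t0)"
    and w: "is_solution \<alpha> p w w' t0 t2" "t0 < t2" "(w \<longlongrightarrow> 0) (at_right t0)" "(w' \<longlongrightarrow> v0) (at_right t0)"
    and v0: "0 < v0" and t: "t0 < t" "t < t1" "t < t2"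
  shows "u t = w t"
proof -
  obtain s where s: "t0 < s" "s \<le> t" "s < t1" "s < t2" and init: "u s = w s" "u' s = w' s"
    using solutions_from_zero_meet[OF p u w v0 t(1)] by blast
  define b where "b = min t1 t2"
  have "{s..<b} \<subseteq> {t0<..<t1}" "{s..<b} \<subseteq> {t0<..<t2}" using s by (auto simp: b_def)
  then have "continuous_on {s..<b} u" "continuous_on {s..<b} u'"
    "continuous_on {s..<b} w" "continuous_on {s..<b} w'"
    using is_solution_continuous[OF u(1)] is_solution_continuous[OF w(1)] by (auto intro: continuous_on_subset)
  moreover have "is_solution \<alpha> p u u' s b" "is_solution \<alpha> p w w' s b"
    using is_solution_subinterval[OF u(1)] is_solution_subinterval[OF w(1)] s by (auto simp: b_def)
  moreover have "0 < u s" using u(1) s by (simp add: is_solution_def)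
  moreover have "t \<in> {s..<b}" using s t by (simp add: b_def)
  ultimately show ?thesis using is_solution_unique_right[OF \<alpha>] init by blast
qed

section \<open>The solution leaving \<open>0\<close> with speed \<open>v\<^sub>0\<close>\<close>

locale bounce =
  fixes \<alpha> p1 p2 v0 L :: real and p :: "real \<Rightarrow> real"
  assumes \<alpha>: "0 < \<alpha>" "\<alpha> < 1"
    and p_lipschitz: "L-lipschitz_on UNIV p"
    and p_bounds: "\<And>t. p2 \<le> p t \<and> p t \<le> p1" and p1_neg: "p1 < 0"
    and v0_large: "sqrt (2 * (p1 - p2) * ((\<alpha> - 1) * p1) powr (-1 / \<alpha>)) < v0"
begin

text \<open>\<open>\<eta>\<close> is the position at which the repulsion \<open>u\<^sup>-\<^sup>\<alpha>\<close> balances \<open>(\<alpha> - 1) p\<^sub>1\<close>; beyond it the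
  acceleration is at most \<open>\<alpha> p\<^sub>1 < 0\<close>.\<close>
definition \<eta> :: real where "\<eta> = ((\<alpha> - 1) * p1) powr (-1 / \<alpha>)"

text \<open>A lower bound for the kinetic energy of the rising solution at the position \<open>\<eta>\<close>.\<close>
definition energy_margin :: real where "energy_margin = v0\<^sup>2 / 2 - (p1 - p2) * \<eta>"

definition force_primitive :: "real \<Rightarrow> real" where "force_primitive x = x powr (1 - \<alpha>) / (1 - \<alpha>) + p1 * x"

lemma p2_le_p1: "p2 \<le> p1"
  using p_bounds[of 0] by simp

lemma balance_pos: "0 < (\<alpha> - 1) * p1"
  using \<alpha> p1_neg by (intro mult_neg_neg) auto

lemma eta_pos: "0 < \<eta>"
  using balance_pos \<alpha> p1_neg by (simp add: \<eta>_def)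

lemma eta_powr: "\<eta> powr - \<alpha> = (\<alpha> - 1) * p1"
proof -
  have "\<eta> powr - \<alpha> = ((\<alpha> - 1) * p1) powr ((-1 / \<alpha>) * (- \<alpha>))"
    unfolding \<eta>_def by (simp add: powr_powr)
  also have "(-1 / \<alpha>) * (- \<alpha>) = 1" using \<alpha> by simp
  finally show ?thesis using balance_pos by simp
qed

lemma v0_pos: "0 < v0" and energy_margin_pos: "0 < energy_margin"
proof -
  have nonneg: "0 \<le> 2 * (p1 - p2) * \<eta>" using p2_le_p1 eta_pos by simp
  have v0: "sqrt (2 * (p1 - p2) * \<eta>) < v0" using v0_large by (simp add: \<eta>_def)
  then show "0 < v0" using real_sqrt_ge_zero[OF nonneg] by linarith
  have "(sqrt (2 * (p1 - p2) * \<eta>))\<^sup>2 < v0\<^sup>2"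
    using v0 nonneg by (intro power_strict_mono) auto
  then show "0 < energy_margin" using nonneg by (simp add: energy_margin_def algebra_simps)
qed

lemma powr_one_minus_lower_bound:
  assumes "0 \<le> x"
  shows "- p1 * min x \<eta> \<le> x powr (1 - \<alpha>) / (1 - \<alpha>)"
proof (cases "x \<le> \<eta>")
  case True
  show ?thesis
  proof (cases "x = 0")
    case False
    then have x: "0 < x" using assms by simp
    have "x powr (1 - \<alpha>) = x * x powr - \<alpha>" using powr_add[of x 1 "- \<alpha>"] x by simp
    also have "\<dots> \<ge> x * \<eta> powr - \<alpha>" using x True \<alpha> by (intro mult_left_mono powr_mono2') auto
    finally have "- p1 * x * (1 - \<alpha>) \<le> x powr (1 - \<alpha>)" by (simp add: eta_powr algebra_simps)
    then show ?thesis using True \<alpha> by (simp add: pos_le_divide_eq)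
  qed (use eta_pos in simp)
next
  case False
  have "\<eta> powr (1 - \<alpha>) \<le> x powr (1 - \<alpha>)" using False eta_pos \<alpha> by (intro powr_mono2) auto
  moreover have "\<eta> powr (1 - \<alpha>) = \<eta> * \<eta> powr - \<alpha>" using powr_add[of \<eta> 1 "- \<alpha>"] eta_pos by simp
  ultimately have "- p1 * \<eta> * (1 - \<alpha>) \<le> x powr (1 - \<alpha>)" by (simp add: eta_powr algebra_simps)
  then show ?thesis using False \<alpha> by (simp add: pos_le_divide_eq)
qed

lemma force_primitive_eta: "force_primitive \<eta> = 0"
proof -
  have "\<eta> powr (1 - \<alpha>) = \<eta> * ((\<alpha> - 1) * p1)"
    using powr_add[of \<eta> 1 "- \<alpha>"] eta_pos eta_powr by simp
  then show ?thesis using \<alpha> by (simp add: force_primitive_def field_simps)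
qed

lemma force_primitive_nonneg: "0 \<le> x \<Longrightarrow> x \<le> \<eta> \<Longrightarrow> 0 \<le> force_primitive x"
  using powr_one_minus_lower_bound[of x] by (simp add: force_primitive_def)

lemma force_primitive_antimono:
  assumes "\<eta> \<le> a" "a \<le> b"
  shows "force_primitive b \<le> force_primitive a"
proof -
  have "force_primitive b - force_primitive a \<le> 0 - 0"
  proof (rule increment_le_by_derivative[of a b force_primitive "\<lambda>_. 0" "\<lambda>x. x powr - \<alpha> + p1" "\<lambda>_. 0"])
    show "continuous_on {a..b} force_primitive"
      unfolding force_primitive_def using assms eta_pos \<alpha> by (intro continuous_intros) auto
    fix x assume x: "a < x" "x < b"
    then show "(force_primitive has_real_derivative x powr - \<alpha> + p1) (at x)"
      unfolding force_primitive_def using assms eta_pos \<alpha> by (auto intro!: derivative_eq_intros)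
    have "x powr - \<alpha> \<le> \<eta> powr - \<alpha>" using x assms eta_pos \<alpha> by (intro powr_mono2') auto
    moreover have "\<alpha> * p1 < 0" using \<alpha> p1_neg by (simp add: mult_pos_neg)
    ultimately show "x powr - \<alpha> + p1 \<le> 0" by (simp add: eta_powr algebra_simps)
  qed (use assms in auto)
  then show ?thesis by simp
qed

lemma force_primitive_le:
  assumes "\<eta> \<le> e" "0 \<le> x" "x \<le> e"
  shows "force_primitive e \<le> force_primitive x"
proof (cases "x \<le> \<eta>")
  case True
  then show ?thesis using force_primitive_antimono[of \<eta> e] force_primitive_nonneg[of x] force_primitive_eta assms by simp
qed (use force_primitive_antimono assms in simp)

definition rising_height :: real where "rising_height = \<eta> + energy_margin / (- 2 * p2)"

lemma rising_energy_lower_bound: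
  assumes x: "x \<in> {0..rising_height}"
  shows "energy_margin / 2 \<le> v0\<^sup>2 / 2 + x powr (1 - \<alpha>) / (1 - \<alpha>) + p2 * x"
proof -
  have p2: "p2 < 0" using p2_le_p1 p1_neg by simp
  have bound: "- p1 * min x \<eta> \<le> x powr (1 - \<alpha>) / (1 - \<alpha>)"
    using x by (intro powr_one_minus_lower_bound) simp
  show ?thesis
  proof (cases "x \<le> \<eta>")
    case True
    have "(p1 - p2) * x \<le> (p1 - p2) * \<eta>" using True p2_le_p1 by (intro mult_left_mono) auto
    then show ?thesis using bound True energy_margin_pos by (simp add: energy_margin_def algebra_simps)
  next
    case False
    have "- p2 * (x - \<eta>) \<le> - p2 * (energy_margin / (- 2 * p2))"
      using x p2 by (intro mult_left_mono) (auto simp: rising_height_def)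
    also have "\<dots> = energy_margin / 2" using p2 by simp
    finally show ?thesis using bound False by (simp add: energy_margin_def algebra_simps)
  qed
qed

lemma rising_phase:
  obtains T u v where "t0 < T" "is_solution \<alpha> p u v t0 T" "continuous_on {t0..T} u" "continuous_on {t0..T} v"
    "u t0 = 0" "v t0 = v0" "\<eta> < u T" "\<And>t. t \<in> {t0..T} \<Longrightarrow> 0 < v t"
proof -
  have "\<eta> < rising_height"
    using energy_margin_pos p2_le_p1 p1_neg by (simp add: rising_height_def divide_pos_neg)
  then have "0 < rising_height" using eta_pos by simp
  moreover have "0 < energy_margin / 2" using energy_margin_pos by simp
  ultimately obtain T u v where "t0 < T" "is_solution \<alpha> p u v t0 T" "continuous_on {t0..T} u"
    "continuous_on {t0..T} v" "u t0 = 0" "v t0 = 1 * sqrt (2 * (v0\<^sup>2 / 2))" "u T = 0 + 1 * rising_height"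
    "\<And>t. t \<in> {t0..T} \<Longrightarrow> 0 < 1 * v t"
    using solution_via_hodograph[OF \<alpha>(2) p_lipschitz, of 1 rising_height "energy_margin / 2" 0 p2 "v0\<^sup>2 / 2" t0]
      p_bounds rising_energy_lower_bound by auto
  then show ?thesis
    using that \<open>\<eta> < rising_height\<close> v0_pos by simp
qed

lemma turning_phase:
  assumes V: "0 < V"
  obtains b c u v where "tA < b" "b < c" "is_solution \<alpha> p u v tA c"
    "continuous_on {tA..c} u" "continuous_on {tA..c} v" "u tA = \<eta>" "v tA = V" "v b < 0" "\<eta> \<le> u b"
proof -
  define k where "k = - \<alpha> * p1"
  have k: "0 < k" using \<alpha> p1_neg by (simp add: k_def mult_pos_neg)
  define T where "T = tA + 2 * V / k + 1"
  have "tA < T" using k V by (simp add: T_def add_pos_pos)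
  obtain u v where u_cont: "continuous_on {tA..T} u" and v_cont: "continuous_on {tA..T} v"
    and init: "u tA = \<eta>" "v tA = V"
    and u_deriv: "\<And>t. tA < t \<Longrightarrow> t < T \<Longrightarrow> (u has_real_derivative v t) (at t)"
    and v_deriv: "\<And>t. tA < t \<Longrightarrow> t < T \<Longrightarrow> (v has_real_derivative p t + max (u t) \<eta> powr - \<alpha>) (at t)"
    using truncated_newton_solvable[OF less_imp_le[OF \<open>tA < T\<close>] \<alpha>(1) eta_pos
        lipschitz_on_continuous_on[OF p_lipschitz]] by blast
  have "p t + max (u t) \<eta> powr - \<alpha> \<le> - k" for t
  proof -
    have "max (u t) \<eta> powr - \<alpha> \<le> \<eta> powr - \<alpha>" using eta_pos \<alpha> by (intro powr_mono2') auto
    then show ?thesis using p_bounds[of t] by (simp add: eta_powr k_def algebra_simps)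
  qed
  then obtain b c where bc: "tA < b" "b < c" "c \<le> T" "v b < 0" and above: "\<And>t. t \<in> {tA..c} \<Longrightarrow> \<eta> \<le> u t"
    using concave_excursion[OF k V T_def u_cont v_cont _ _ _ init(2), of "\<lambda>t. p t + max (u t) \<eta> powr - \<alpha>"]
      u_deriv v_deriv init(1) by auto
  have "is_solution \<alpha> p u v tA c"
    unfolding is_solution_iff
  proof (intro ballI conjI)
    fix t assume t: "t \<in> {tA<..<c}"
    then have "\<eta> \<le> u t" "t < T" using above bc by auto
    then show "0 < u t" "(u has_real_derivative v t) (at t)" "(v has_real_derivative p t + u t powr - \<alpha>) (at t)"
      using eta_pos u_deriv[of t] v_deriv[of t] t by (auto simp: max_absorb1)
  qed
  moreover have "continuous_on {tA..c} u" "continuous_on {tA..c} v"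
    using bc by (auto intro: continuous_on_subset[OF u_cont] continuous_on_subset[OF v_cont])
  ultimately show ?thesis using that bc init above[of b] by auto
qed

lemma falling_phase:
  assumes d: "\<eta> \<le> d" and V: "V < 0"
  obtains T u v where "tB < T" "is_solution \<alpha> p u v tB T" "continuous_on {tB..T} u" "continuous_on {tB..T} v"
    "u tB = d" "v tB = V" "u T = 0" "v T < 0"
proof -
  have "0 < d" using d eta_pos by simp
  have lower: "V\<^sup>2 / 2 \<le> V\<^sup>2 / 2 + ((d + - 1 * x) powr (1 - \<alpha>) - d powr (1 - \<alpha>)) / (1 - \<alpha>) + - p1 * x"
    if "x \<in> {0..d}" for x
    using force_primitive_le[OF d, of "d - x"] that by (simp add: force_primitive_def algebra_simps diff_divide_distrib)
  obtain T u v where "tB < T" "is_solution \<alpha> p u v tB T" "continuous_on {tB..T} u"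
    "continuous_on {tB..T} v" "u tB = d" "v tB = - 1 * sqrt (2 * (V\<^sup>2 / 2))" "u T = d + - 1 * d"
    "\<And>t. t \<in> {tB..T} \<Longrightarrow> 0 < - 1 * v t"
    using solution_via_hodograph[OF \<alpha>(2) p_lipschitz, of "- 1" d "V\<^sup>2 / 2" d "- p1" "V\<^sup>2 / 2" tB]
      \<open>0 < d\<close> V p_bounds lower by auto
  then show ?thesis using that V by fastforce
qed

lemma existence:
  obtains t1 u v where "t0 < t1" "is_solution \<alpha> p u v t0 t1"
    "(u \<longlongrightarrow> 0) (at_right t0)" "(v \<longlongrightarrow> v0) (at_right t0)"
    "(u \<longlongrightarrow> 0) (at_left t1)" "\<exists>v1 < 0. (v \<longlongrightarrow> v1) (at_left t1)"
proof -
  obtain T1 u1 v1 where "t0 < T1" and sol1: "is_solution \<alpha> p u1 v1 t0 T1"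
    and cont1: "continuous_on {t0..T1} u1" "continuous_on {t0..T1} v1"
    and init1: "u1 t0 = 0" "v1 t0 = v0" and "\<eta> < u1 T1" and v1_pos: "\<And>t. t \<in> {t0..T1} \<Longrightarrow> 0 < v1 t"
    using rising_phase[of t0] by blast
  obtain tA where tA: "t0 \<le> tA" "tA \<le> T1" "u1 tA = \<eta>"
    using IVT'[OF _ _ less_imp_le[OF \<open>t0 < T1\<close>] cont1(1), of \<eta>] init1 eta_pos \<open>\<eta> < u1 T1\<close> by auto
  then have "t0 < tA" "tA < T1" using init1 eta_pos \<open>\<eta> < u1 T1\<close> by (auto simp: le_less)
  have "0 < v1 tA" using v1_pos tA \<open>tA < T1\<close> by simp
  obtain tB c u2 v2 where "tA < tB" "tB < c" and sol2: "is_solution \<alpha> p u2 v2 tA c"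
    and cont2: "continuous_on {tA..c} u2" "continuous_on {tA..c} v2"
    and init2: "u2 tA = \<eta>" "v2 tA = v1 tA" and "v2 tB < 0" "\<eta> \<le> u2 tB"
    using turning_phase[OF \<open>0 < v1 tA\<close>, of tA] by blast
  have "{tA..<c} \<subseteq> {tA..c}" "tA < c" "u2 tA = u1 tA" using \<open>tA < tB\<close> \<open>tB < c\<close> init2 tA by auto
  then obtain U12 V12 where sol12: "is_solution \<alpha> p U12 V12 t0 c"
    and early12: "\<And>t. t0 < t \<Longrightarrow> t \<le> tA \<Longrightarrow> U12 t = u1 t \<and> V12 t = v1 t"
    and late12: "\<And>t. tA < t \<Longrightarrow> t < c \<Longrightarrow> U12 t = u2 t \<and> V12 t = v2 t"
    using is_solution_continue[OF \<alpha>(1) sol1 \<open>t0 < tA\<close> \<open>tA < T1\<close> sol2 _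
        continuous_on_subset[OF cont2(1)] continuous_on_subset[OF cont2(2)] _ init2(2)] by blast
  obtain t1 u3 v3 where "tB < t1" and sol3: "is_solution \<alpha> p u3 v3 tB t1"
    and cont3: "continuous_on {tB..t1} u3" "continuous_on {tB..t1} v3"
    and init3: "u3 tB = U12 tB" "v3 tB = V12 tB" and "u3 t1 = 0" "v3 t1 < 0"
    using falling_phase[of "U12 tB" "V12 tB" tB] late12[of tB] \<open>tA < tB\<close> \<open>tB < c\<close> \<open>v2 tB < 0\<close> \<open>\<eta> \<le> u2 tB\<close>
    by auto
  have "{tB..<t1} \<subseteq> {tB..t1}" "t0 < tB" using \<open>t0 < tA\<close> \<open>tA < tB\<close> by auto
  then obtain U V where sol: "is_solution \<alpha> p U V t0 t1"
    and early: "\<And>t. t0 < t \<Longrightarrow> t \<le> tB \<Longrightarrow> U t = U12 t \<and> V t = V12 t"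
    and late: "\<And>t. tB < t \<Longrightarrow> t < t1 \<Longrightarrow> U t = u3 t \<and> V t = v3 t"
    using is_solution_continue[OF \<alpha>(1) sol12 _ \<open>tB < c\<close> sol3 \<open>tB < t1\<close>
        continuous_on_subset[OF cont3(1)] continuous_on_subset[OF cont3(2)] init3] by blast
  have "U t = u1 t \<and> V t = v1 t" if "t0 < t" "t < tA" for t
    using early[of t] early12[of t] that \<open>tA < tB\<close> by auto
  then have "(U \<longlongrightarrow> 0) (at_right t0)" "(V \<longlongrightarrow> v0) (at_right t0)"
    using tendsto_at_right_by_continuous_Icc[OF cont1(1) \<open>t0 < T1\<close> \<open>t0 < tA\<close>, of U]
      tendsto_at_right_by_continuous_Icc[OF cont1(2) \<open>t0 < T1\<close> \<open>t0 < tA\<close>, of V] init1 by auto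
  moreover have "(U \<longlongrightarrow> 0) (at_left t1)" "(V \<longlongrightarrow> v3 t1) (at_left t1)"
    using tendsto_at_left_by_continuous_Icc[OF cont3(1) \<open>tB < t1\<close> \<open>tB < t1\<close>, of U]
      tendsto_at_left_by_continuous_Icc[OF cont3(2) \<open>tB < t1\<close> \<open>tB < t1\<close>, of V] late \<open>u3 t1 = 0\<close> by auto
  ultimately show ?thesis
    using that[OF _ sol] \<open>t0 < tA\<close> \<open>tA < tB\<close> \<open>tB < t1\<close> \<open>v3 t1 < 0\<close> by auto
qed

end

theorem lemma3p2:
  fixes \<alpha> p1 p2 t0 v0 :: real and p :: "real \<Rightarrow> real"
  assumes "0 < \<alpha>" "\<alpha> < 1"
    and "\<exists>L. L-lipschitz_on UNIV p"
    and "p2 \<le> p1" "p1 < 0"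
    and "\<And>t. p2 \<le> p t \<and> p t \<le> p1"
    and "v0 > sqrt (2 * (p1 - p2) * (((\<alpha> - 1) * p1) powr (-1 / \<alpha>)))"
  shows "\<exists>t1 u u'. t0 < t1 \<and> is_solution \<alpha> p u u' t0 t1 \<and>
           (u \<longlongrightarrow> 0) (at_right t0) \<and> (u \<longlongrightarrow> 0) (at_left t1) \<and>
           (u' \<longlongrightarrow> v0) (at_right t0) \<and>
           (\<exists>v1 < 0. (u' \<longlongrightarrow> v1) (at_left t1)) \<and>
           (\<forall>t2 w w'. t0 < t2 \<and> is_solution \<alpha> p w w' t0 t2 \<and>
              (w \<longlongrightarrow> 0) (at_right t0) \<and> (w' \<longlongrightarrow> v0) (at_right t0) \<longrightarrow>
              t2 \<le> t1 \<and> (\<forall>t\<in>{t0<..<t2}. w t = u t))"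
proof -
  obtain L where L: "L-lipschitz_on UNIV p" using assms(3) by blast
  interpret bounce \<alpha> p1 p2 v0 L p
    using assms L by unfold_locales auto
  obtain t1 u u' where "t0 < t1" and u: "is_solution \<alpha> p u u' t0 t1"
    and u_t0: "(u \<longlongrightarrow> 0) (at_right t0)" "(u' \<longlongrightarrow> v0) (at_right t0)"
    and u_t1: "(u \<longlongrightarrow> 0) (at_left t1)" "\<exists>v1 < 0. (u' \<longlongrightarrow> v1) (at_left t1)"
    by (rule existence)
  have "t2 \<le> t1 \<and> (\<forall>t\<in>{t0<..<t2}. w t = u t)"
    if w: "is_solution \<alpha> p w w' t0 t2" "t0 < t2" "(w \<longlongrightarrow> 0) (at_right t0)" "(w' \<longlongrightarrow> v0) (at_right t0)"
    for t2 w w'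
  proof -
    have agree: "w t = u t" if "t0 < t" "t < t1" "t < t2" for t
      using solutions_from_zero_agree[OF L \<alpha>(1) w u \<open>t0 < t1\<close> u_t0 v0_pos that(1) that(3) that(2)] .
    have "t2 \<le> t1"
    proof (rule ccontr)
      assume "\<not> t2 \<le> t1"
      then have "t1 < t2" by simp
      with agree show False
        using is_solution_not_beyond_zero[OF w(1) \<open>t0 < t1\<close> \<open>t1 < t2\<close> u_t1(1)] by simp
    qed
    with agree show ?thesis by simp
  qed
  then show ?thesis using \<open>t0 < t1\<close> u u_t0 u_t1 by blast
qed

end
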